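(* Within the pseudovariety $\mathsf M$ of all finite monoids, every set $\Sigma$ of $\mathsf M$-pseudoidentities such that $[\![\Sigma]\!]$ consists of groups is h-strong.
   Context: $\mathsf M$ is the pseudovariety of finite monoids (signature: multiplication and $1$); $\Omega_A\mathsf M$ is the free profinite monoid on a finite set $A$. An $\mathsf M$-pseudoidentity is $u=v$ with $u,v\in\Omega_B\mathsf M$, $B$ finite; it holds in a finite monoid $T$ if both sides agree under every continuous homomorphism $\Omega_B\mathsf M\to T$; $[\![\Sigma]\!]$ is the class of finite monoids satisfying $\Sigma$. Provability: for finite $A$, $\Sigma_0\subseteq\Omega_A\mathsf M\times\Omega_A\mathsf M$ is the set of pairs $(\mathbf t(\varphi(u),w_1,\dots,w_n),\mathbf t(\varphi(v),w_1,\dots,w_n))$ with $u=v$ or $v=u$ in $\Sigma$ ($u,v\in\Omega_B\mathsf M$), $\varphi:\Omega_B\mathsf M\to\Omega_A\mathsf M$ a continuous homomorphism, $\mathbf t$ a monoid term, $w_i\in\Omega_A\mathsf M$; $\Sigma_{2\alpha+1}$ is the transitive closure of $\Sigma_{2\alpha}$, $\Sigma_{2\alpha+2}$ the topological closure of $\Sigma_{2\alpha+1}$, unions at limit ordinals; $u=v$ is provable from $\Sigma$ if $(u,v)\in\bigcup_\alpha\Sigma_\alpha$. $\Sigma$ is h-strong within $\mathsf M$ if every $\mathsf M$-pseudoidentity valid in $[\![\Sigma]\!]$ is provable from $\Sigma$. *)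

theory Defs
  imports "HOL-Algebra.Group"
begin

text \<open>Finite monoids are represented (up to isomorphism) as HOL-Algebra monoids with a
finite carrier contained in nat.
The free profinite monoid on A is realised as the set of implicit operations:
families w T f (T a finite monoid, f : A -> carrier T) natural w.r.t. monoid
homomorphisms, normalised to undefined outside the admissible inputs.\<close>

type_synonym pw = "nat monoid \<Rightarrow> (nat \<Rightarrow> nat) \<Rightarrow> nat"

definition tests :: "nat set \<Rightarrow> (nat monoid \<times> (nat \<Rightarrow> nat)) set" where
  "tests A = {(T, f). monoid T \<and> finite (carrier T) \<and> f ` A \<subseteq> carrier T}"

definition mhom :: "(nat \<Rightarrow> nat) \<Rightarrow> nat monoid \<Rightarrow> nat monoid \<Rightarrow> bool" where
  "mhom h T T' \<longleftrightarrow> h \<in> carrier T \<rightarrow> carrier T'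
     \<and> (\<forall>x\<in>carrier T. \<forall>y\<in>carrier T. h (x \<otimes>\<^bsub>T\<^esub> y) = h x \<otimes>\<^bsub>T'\<^esub> h y)
     \<and> h \<one>\<^bsub>T\<^esub> = \<one>\<^bsub>T'\<^esub>"

definition Omega :: "nat set \<Rightarrow> pw set" where
  "Omega A = {w.
     (\<forall>T f. (T, f) \<in> tests A \<longrightarrow> w T f \<in> carrier T)
   \<and> (\<forall>T f. (T, f) \<notin> tests A \<longrightarrow> w T f = undefined)
   \<and> (\<forall>T f g. (\<forall>a\<in>A. f a = g a) \<longrightarrow> w T f = w T g)
   \<and> (\<forall>T f T' h. (T, f) \<in> tests A \<longrightarrow> monoid T' \<longrightarrow> finite (carrier T') \<longrightarrow> mhom h T T'
        \<longrightarrow> w T' (h \<circ> f) = h (w T f))}"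

definition omul :: "nat set \<Rightarrow> pw \<Rightarrow> pw \<Rightarrow> pw" where
  "omul A u v = (\<lambda>T f. if (T, f) \<in> tests A then u T f \<otimes>\<^bsub>T\<^esub> v T f else undefined)"

definition oone :: "nat set \<Rightarrow> pw" where
  "oone A = (\<lambda>T f. if (T, f) \<in> tests A then \<one>\<^bsub>T\<^esub> else undefined)"

text \<open>Agreement on a set of evaluation points; finite sets of evaluation points
give the basic open neighbourhoods of the (pointwise = profinite) topology.\<close>
definition agree :: "(nat monoid \<times> (nat \<Rightarrow> nat)) set \<Rightarrow> pw \<Rightarrow> pw \<Rightarrow> bool" where
  "agree F u u' \<longleftrightarrow> (\<forall>(T, f)\<in>F. u T f = u' T f)"

definition cont_hom :: "nat set \<Rightarrow> nat set \<Rightarrow> (pw \<Rightarrow> pw) \<Rightarrow> bool" where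
  "cont_hom B A \<phi> \<longleftrightarrow> \<phi> \<in> Omega B \<rightarrow> Omega A
     \<and> (\<forall>u\<in>Omega B. \<forall>v\<in>Omega B. \<phi> (omul B u v) = omul A (\<phi> u) (\<phi> v))
     \<and> \<phi> (oone B) = oone A
     \<and> (\<forall>u\<in>Omega B. \<forall>G. finite G \<and> G \<subseteq> tests A \<longrightarrow>
          (\<exists>F. finite F \<and> F \<subseteq> tests B \<and>
               (\<forall>u'\<in>Omega B. agree F u u' \<longrightarrow> agree G (\<phi> u) (\<phi> u'))))"

definition cont_hom_fin :: "nat set \<Rightarrow> nat monoid \<Rightarrow> (pw \<Rightarrow> nat) \<Rightarrow> bool" where
  "cont_hom_fin B T \<psi> \<longleftrightarrow> \<psi> \<in> Omega B \<rightarrow> carrier T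
     \<and> (\<forall>u\<in>Omega B. \<forall>v\<in>Omega B. \<psi> (omul B u v) = \<psi> u \<otimes>\<^bsub>T\<^esub> \<psi> v)
     \<and> \<psi> (oone B) = \<one>\<^bsub>T\<^esub>
     \<and> (\<forall>u\<in>Omega B. \<exists>F. finite F \<and> F \<subseteq> tests B \<and>
               (\<forall>u'\<in>Omega B. agree F u u' \<longrightarrow> \<psi> u' = \<psi> u))"

text \<open>A pseudoidentity is a triple (B, u, v) with u, v in Omega B.\<close>
definition psat :: "nat monoid \<Rightarrow> nat set \<times> pw \<times> pw \<Rightarrow> bool" where
  "psat T p = (case p of (B, u, v) \<Rightarrow> \<forall>\<psi>. cont_hom_fin B T \<psi> \<longrightarrow> \<psi> u = \<psi> v)"

definition models :: "(nat set \<times> pw \<times> pw) set \<Rightarrow> nat monoid set" where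
  "models Sig = {T. monoid T \<and> finite (carrier T) \<and> (\<forall>p\<in>Sig. psat T p)}"

datatype mterm = MVar nat | MOne | MMul mterm mterm

fun mvars :: "mterm \<Rightarrow> nat set" where
  "mvars (MVar i) = {i}"
| "mvars MOne = {}"
| "mvars (MMul s t) = mvars s \<union> mvars t"

fun teval :: "nat set \<Rightarrow> (nat \<Rightarrow> pw) \<Rightarrow> mterm \<Rightarrow> pw" where
  "teval A \<sigma> (MVar i) = \<sigma> i"
| "teval A \<sigma> MOne = oone A"
| "teval A \<sigma> (MMul s t) = omul A (teval A \<sigma> s) (teval A \<sigma> t)"

text \<open>Sigma_0: variable 0 of the term is the slot for phi(u), variable i+1 is w_{i+1}.\<close>
definition Sigma0 :: "(nat set \<times> pw \<times> pw) set \<Rightarrow> nat set \<Rightarrow> (pw \<times> pw) set" where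
  "Sigma0 Sig A = {(teval A (case_nat (\<phi> u) (\<lambda>i. ws ! i)) t, teval A (case_nat (\<phi> v) (\<lambda>i. ws ! i)) t)
      | B u v \<phi> t ws. ((B, u, v) \<in> Sig \<or> (B, v, u) \<in> Sig) \<and> cont_hom B A \<phi>
          \<and> mvars t \<subseteq> {..length ws} \<and> set ws \<subseteq> Omega A}"

definition pclos :: "nat set \<Rightarrow> (pw \<times> pw) set \<Rightarrow> (pw \<times> pw) set" where
  "pclos A P = {(u, v). u \<in> Omega A \<and> v \<in> Omega A \<and>
      (\<forall>F. finite F \<and> F \<subseteq> tests A \<longrightarrow> (\<exists>(u', v')\<in>P. agree F u u' \<and> agree F v v'))}"

text \<open>The union of the transfinite chain Sigma_alpha equals the least superset of Sigma_0
closed under transitive and topological closure.\<close>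
definition provable :: "(nat set \<times> pw \<times> pw) set \<Rightarrow> nat set \<Rightarrow> (pw \<times> pw) set" where
  "provable Sig A = \<Inter> {P. Sigma0 Sig A \<subseteq> P \<and> trans P \<and> pclos A P \<subseteq> P}"

definition h_strong :: "(nat set \<times> pw \<times> pw) set \<Rightarrow> bool" where
  "h_strong Sig \<longleftrightarrow> (\<forall>B u v. finite B \<and> u \<in> Omega B \<and> v \<in> Omega B
      \<and> (\<forall>T\<in>models Sig. psat T (B, u, v)) \<longrightarrow> (u, v) \<in> provable Sig B)"

end

theory Submission
  imports Defs "HOL-Library.Nat_Bijection" "HOL-Algebra.Coset"
begin

text \<open>Since \<open>U\<^sub>1 = {0, 1}\<close> is not a group, some pseudoidentity of \<open>\<Sigma>\<close> separates \<open>0\<close> from \<open>1\<close>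
  in \<open>U\<^sub>1\<close>; substituting a given \<open>x\<close> for the letters sent to \<open>0\<close> and \<open>1\<close> for the others shows that
  \<open>x\<^sup>\<omega> = 1\<close> is provable. Fix an idempotent \<open>E\<close> of \<open>\<Omega>\<^sub>B\<close> lying in the minimal ideal of every finite
  quotient (a limit of iterated \<open>(E w E)\<^sup>\<omega>\<close> over all words \<open>w\<close>); then \<open>E = 1\<close> is provable too. On
  finitely many evaluation points, the sandwiches \<open>E x E\<close> form a finite group, and its quotient by
  the provably-trivial sandwiches is a finite monoid satisfying \<open>\<Sigma>\<close>. A pseudoidentity \<open>u = v\<close> valid
  in \<open>[\<Sigma>]\<close> therefore holds there, which says that \<open>E u E\<close> is approximated by elements provably
  equal to \<open>E v E\<close>; closure of provability under limits gives \<open>u = E u E = E v E = v\<close>.\<close>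

section \<open>Idempotent powers in finite monoids\<close>

context monoid begin

lemma nat_pow_pigeonhole:
  assumes fin: "finite (carrier G)" and x: "x \<in> carrier G"
  obtains i j :: nat where "i < j" "j \<le> card (carrier G)" "x [^] i = x [^] j"
proof -
  let ?n = "card (carrier G)"
  have "card ((\<lambda>k::nat. x [^] k) ` {0..?n}) \<le> ?n"
    using x fin by (intro card_mono) auto
  hence "\<not> inj_on (\<lambda>k::nat. x [^] k) {0..?n}"
    using card_image by fastforce
  then obtain i j where "i \<in> {0..?n}" "j \<in> {0..?n}" "i \<noteq> j" "x [^] i = x [^] (j::nat)"
    unfolding inj_on_def by blast
  thus ?thesis using that by (cases "i < j") (auto simp: not_less_iff_gr_or_eq)
qed

lemma nat_pow_periodic:
  assumes x: "x \<in> carrier G" and period: "x [^] i = x [^] (i + p::nat)" and "i \<le> m"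
  shows "x [^] (m + k * p) = x [^] m"
proof (induction k)
  case (Suc k)
  have "x [^] (m + Suc k * p) = x [^] (m - i + k * p) \<otimes> x [^] (i + p)"
    using x \<open>i \<le> m\<close> by (simp add: nat_pow_mult algebra_simps)
  also have "\<dots> = x [^] (m + k * p)"
    using x \<open>i \<le> m\<close> by (simp add: period[symmetric] nat_pow_mult algebra_simps)
  finally show ?case using Suc by simp
qed simp

lemma nat_pow_fact_idem:
  assumes fin: "finite (carrier G)" and x: "x \<in> carrier G"
  defines "N \<equiv> fact (card (carrier G)) :: nat"
  shows "x [^] N \<otimes> x [^] N = x [^] N"
proof -
  obtain i j where ij: "i < j" "j \<le> card (carrier G)" "x [^] i = x [^] (j::nat)"
    using nat_pow_pigeonhole[OF fin x] by blast
  have "j - i dvd N" unfolding N_def using ij by (intro dvd_fact) auto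
  then obtain k where k: "N = k * (j - i)" by (metis dvdE mult.commute)
  have "i \<le> N" unfolding N_def using ij fact_ge_self[of "card (carrier G)"] by linarith
  have "x [^] N \<otimes> x [^] N = x [^] (N + k * (j - i))" using x k by (simp add: nat_pow_mult)
  also have "\<dots> = x [^] N" using ij \<open>i \<le> N\<close> by (intro nat_pow_periodic[OF x]) simp_all
  finally show ?thesis .
qed

lemma idem_nat_pow_mult:
  assumes x: "x \<in> carrier G" and idem: "x [^] (n::nat) \<otimes> x [^] n = x [^] n" and "k \<ge> 1"
  shows "x [^] (k * n) = x [^] n"
  using \<open>k \<ge> 1\<close>
proof (induction k rule: dec_induct)
  case (step k)
  have "x [^] (Suc k * n) = x [^] (k * n) \<otimes> x [^] n" using x by (simp add: nat_pow_mult add.commute)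
  thus ?case using step idem by simp
qed simp

lemma nat_pow_fact_dvd:
  assumes fin: "finite (carrier G)" and x: "x \<in> carrier G"
    and "fact (card (carrier G)) dvd L" and "L > 0"
  shows "x [^] (L::nat) = x [^] (fact (card (carrier G)) :: nat)"
proof -
  obtain k where k: "L = k * fact (card (carrier G))" using assms(3) by (auto elim!: dvdE)
  hence "k \<ge> 1" using \<open>L > 0\<close> by (cases k) auto
  thus ?thesis using k idem_nat_pow_mult[OF x nat_pow_fact_idem[OF fin x]] by simp
qed

lemma idem_nat_pow_unique:
  assumes x: "x \<in> carrier G" and "a \<ge> 1" "b \<ge> 1"
    and a: "x [^] (a::nat) \<otimes> x [^] a = x [^] a" and b: "x [^] (b::nat) \<otimes> x [^] b = x [^] b"
  shows "x [^] a = x [^] b"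
proof -
  have "x [^] a = x [^] (b * a)" using idem_nat_pow_mult[OF x a] \<open>b \<ge> 1\<close> by simp
  also have "\<dots> = x [^] b" using idem_nat_pow_mult[OF x b] \<open>a \<ge> 1\<close> by (simp add: mult.commute)
  finally show ?thesis .
qed

lemma idem_nat_pow_pred_unique:
  assumes x: "x \<in> carrier G" and "a \<ge> 1" "b \<ge> 1"
    and a: "x [^] (a::nat) \<otimes> x [^] a = x [^] a" and b: "x [^] (b::nat) \<otimes> x [^] b = x [^] b"
  shows "x [^] (2 * a - 1) = x [^] (2 * b - 1)"
proof -
  have ab: "x [^] a = x [^] b" by (rule idem_nat_pow_unique[OF x assms(2-5)])
  have "x [^] (2 * a - 1) = x [^] (a - 1 + a)"
    using \<open>a \<ge> 1\<close> by (simp add: mult_2)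
  also have "\<dots> = x [^] (a - 1) \<otimes> x [^] b" using x by (simp add: ab nat_pow_mult[symmetric])
  also have "\<dots> = x [^] (b - 1) \<otimes> x [^] a"
    using x \<open>a \<ge> 1\<close> \<open>b \<ge> 1\<close> by (simp add: nat_pow_mult) (simp add: algebra_simps)
  also have "\<dots> = x [^] (b - 1 + b)" using x by (simp add: ab nat_pow_mult[symmetric])
  also have "\<dots> = x [^] (2 * b - 1)"
    using \<open>b \<ge> 1\<close> by (simp add: mult_2)
  finally show ?thesis .
qed

lemma nat_pow_absorb_right:
  assumes z: "z \<in> carrier G" and e: "e \<in> carrier G" and "z \<otimes> e = z" and "k \<ge> 1"
  shows "z [^] (k::nat) \<otimes> e = z [^] k"
  using \<open>k \<ge> 1\<close> by (induction k rule: dec_induct) (use assms in \<open>simp_all add: m_assoc\<close>)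

lemma nat_pow_absorb_left:
  assumes z: "z \<in> carrier G" and e: "e \<in> carrier G" and ez: "e \<otimes> z = z" and "k \<ge> 1"
  shows "e \<otimes> z [^] (k::nat) = z [^] k"
  using \<open>k \<ge> 1\<close>
proof (induction k rule: dec_induct)
  case (step k)
  thus ?case using z e by (simp add: m_assoc[symmetric])
qed (use z e ez in simp)

end

definition omega_pow :: "('a, 'b) monoid_scheme \<Rightarrow> 'a \<Rightarrow> 'a" where
  "omega_pow M x = x [^]\<^bsub>M\<^esub> (fact (card (carrier M)) :: nat)"

text \<open>The inverse of \<open>x\<close> in the maximal subgroup at \<open>x\<^sup>\<omega>\<close>; the exponent \<open>2N - 1\<close> rather
  than \<open>N - 1\<close> keeps it positive and at least as large as the index of \<open>x\<close>.\<close>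
definition omega_pred_pow :: "('a, 'b) monoid_scheme \<Rightarrow> 'a \<Rightarrow> 'a" where
  "omega_pred_pow M x = x [^]\<^bsub>M\<^esub> (2 * fact (card (carrier M)) - 1 :: nat)"

section \<open>Implicit operations\<close>

lemma mhom_mult: "mhom h T T' \<Longrightarrow> x \<in> carrier T \<Longrightarrow> y \<in> carrier T \<Longrightarrow> h (x \<otimes>\<^bsub>T\<^esub> y) = h x \<otimes>\<^bsub>T'\<^esub> h y"
  by (simp add: mhom_def)

lemma mhom_one: "mhom h T T' \<Longrightarrow> h \<one>\<^bsub>T\<^esub> = \<one>\<^bsub>T'\<^esub>"
  by (simp add: mhom_def)

lemma mhom_closed: "mhom h T T' \<Longrightarrow> x \<in> carrier T \<Longrightarrow> h x \<in> carrier T'"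
  by (auto simp: mhom_def)

lemma mhom_nat_pow:
  "mhom h T T' \<Longrightarrow> monoid T \<Longrightarrow> x \<in> carrier T \<Longrightarrow> h (x [^]\<^bsub>T\<^esub> (n::nat)) = h x [^]\<^bsub>T'\<^esub> n"
  by (induction n) (auto simp: mhom_def monoid.nat_pow_closed)

lemma mhom_omega_pow:
  assumes T: "monoid T" "finite (carrier T)" and T': "monoid T'" "finite (carrier T')"
    and h: "mhom h T T'" and x: "x \<in> carrier T"
  shows "h (omega_pow T x) = omega_pow T' (h x)"
    and "h (omega_pred_pow T x) = omega_pred_pow T' (h x)"
proof -
  let ?N = "fact (card (carrier T)) :: nat" and ?N' = "fact (card (carrier T')) :: nat"
  have hx: "h x \<in> carrier T'" using h x by (rule mhom_closed)
  have "h (x [^]\<^bsub>T\<^esub> ?N \<otimes>\<^bsub>T\<^esub> x [^]\<^bsub>T\<^esub> ?N) = h (x [^]\<^bsub>T\<^esub> ?N)"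
    using monoid.nat_pow_fact_idem[OF T x] by simp
  hence idem: "h x [^]\<^bsub>T'\<^esub> ?N \<otimes>\<^bsub>T'\<^esub> h x [^]\<^bsub>T'\<^esub> ?N = h x [^]\<^bsub>T'\<^esub> ?N"
    using x T(1) by (simp add: mhom_mult[OF h] mhom_nat_pow[OF h] monoid.nat_pow_closed)
  note unique = monoid.idem_nat_pow_unique[OF T'(1) hx _ _ idem monoid.nat_pow_fact_idem[OF T' hx]]
    and pred_unique = monoid.idem_nat_pow_pred_unique[OF T'(1) hx _ _ idem monoid.nat_pow_fact_idem[OF T' hx]]
  show "h (omega_pow T x) = omega_pow T' (h x)"
    using unique by (simp add: omega_pow_def mhom_nat_pow[OF h T(1) x] Suc_leI)
  show "h (omega_pred_pow T x) = omega_pred_pow T' (h x)"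
    using pred_unique by (simp add: omega_pred_pow_def mhom_nat_pow[OF h T(1) x] Suc_leI)
qed

lemma tests_mhom:
  "(T, f) \<in> tests A \<Longrightarrow> monoid T' \<Longrightarrow> finite (carrier T') \<Longrightarrow> mhom h T T' \<Longrightarrow> (T', h \<circ> f) \<in> tests A"
  unfolding tests_def mhom_def by (auto simp: Pi_def)

lemma OmegaI:
  assumes "\<And>T f. (T, f) \<in> tests A \<Longrightarrow> w T f \<in> carrier T"
    and "\<And>T f. (T, f) \<notin> tests A \<Longrightarrow> w T f = undefined"
    and "\<And>T f g. \<forall>a\<in>A. f a = g a \<Longrightarrow> (T, f) \<in> tests A \<Longrightarrow> (T, g) \<in> tests A \<Longrightarrow> w T f = w T g"
    and "\<And>T f T' h. (T, f) \<in> tests A \<Longrightarrow> monoid T' \<Longrightarrow> finite (carrier T') \<Longrightarrow> mhom h T T'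
        \<Longrightarrow> w T' (h \<circ> f) = h (w T f)"
  shows "w \<in> Omega A"
proof -
  have "w T f = w T g" if fg: "\<forall>a\<in>A. f a = g a" for T f g
  proof -
    have "(T, f) \<in> tests A \<longleftrightarrow> (T, g) \<in> tests A" using fg by (auto simp: tests_def image_subset_iff)
    thus ?thesis using assms(2,3) fg by metis
  qed
  thus ?thesis unfolding Omega_def using assms by blast
qed

lemma Omega_closed: "w \<in> Omega A \<Longrightarrow> (T, f) \<in> tests A \<Longrightarrow> w T f \<in> carrier T"
  unfolding Omega_def by blast

lemma Omega_undefined: "w \<in> Omega A \<Longrightarrow> (T, f) \<notin> tests A \<Longrightarrow> w T f = undefined"
  unfolding Omega_def by blast

lemma Omega_cong: "w \<in> Omega A \<Longrightarrow> \<forall>a\<in>A. f a = g a \<Longrightarrow> w T f = w T g"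
  unfolding Omega_def by blast

lemma Omega_mhom:
  "w \<in> Omega A \<Longrightarrow> (T, f) \<in> tests A \<Longrightarrow> monoid T' \<Longrightarrow> finite (carrier T') \<Longrightarrow> mhom h T T'
    \<Longrightarrow> w T' (h \<circ> f) = h (w T f)"
  unfolding Omega_def by blast

lemma Omega_eqI:
  assumes "u \<in> Omega A" "v \<in> Omega A" "\<And>T f. (T, f) \<in> tests A \<Longrightarrow> u T f = v T f"
  shows "u = v"
proof (intro ext)
  fix T f show "u T f = v T f"
    using assms Omega_undefined[OF assms(1)] Omega_undefined[OF assms(2)]
    by (cases "(T, f) \<in> tests A") auto
qed

lemma omul_tests [simp]: "(T, f) \<in> tests A \<Longrightarrow> omul A u v T f = u T f \<otimes>\<^bsub>T\<^esub> v T f"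
  by (simp add: omul_def)

lemma oone_tests [simp]: "(T, f) \<in> tests A \<Longrightarrow> oone A T f = \<one>\<^bsub>T\<^esub>"
  by (simp add: oone_def)

lemma omul_Omega:
  assumes u: "u \<in> Omega A" and v: "v \<in> Omega A"
  shows "omul A u v \<in> Omega A"
proof (rule OmegaI)
  fix T f T' h assume t: "(T, f) \<in> tests A" and T': "monoid T'" "finite (carrier T')" "mhom h T T'"
  show "omul A u v T' (h \<circ> f) = h (omul A u v T f)"
    using t tests_mhom[OF t T'] T' u v by (simp add: Omega_mhom Omega_closed mhom_mult)
next
  fix T and f g :: "nat \<Rightarrow> nat"
  assume "\<forall>a\<in>A. f a = g a" "(T, f) \<in> tests A" "(T, g) \<in> tests A"
  thus "omul A u v T f = omul A u v T g"
    using Omega_cong[OF u, of f g T] Omega_cong[OF v, of f g T] by (simp add: omul_def)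
qed (use u v in \<open>auto simp: omul_def tests_def monoid.m_closed Omega_closed\<close>)

lemma oone_Omega: "oone A \<in> Omega A"
proof (rule OmegaI)
  fix T f T' h assume t: "(T, f) \<in> tests A" and T': "monoid T'" "finite (carrier T')" "mhom h T T'"
  show "oone A T' (h \<circ> f) = h (oone A T f)" using t tests_mhom[OF t T'] T' by (simp add: mhom_one)
qed (auto simp: oone_def tests_def monoid.one_closed)

lemma omul_assoc:
  "u \<in> Omega A \<Longrightarrow> v \<in> Omega A \<Longrightarrow> w \<in> Omega A \<Longrightarrow> omul A (omul A u v) w = omul A u (omul A v w)"
  by (rule Omega_eqI) (auto intro!: omul_Omega simp: Omega_closed tests_def monoid.m_assoc)

lemma omul_oone_left: "u \<in> Omega A \<Longrightarrow> omul A (oone A) u = u"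
  by (rule Omega_eqI) (auto intro!: omul_Omega oone_Omega simp: Omega_closed tests_def)

lemma omul_oone_right: "u \<in> Omega A \<Longrightarrow> omul A u (oone A) = u"
  by (rule Omega_eqI) (auto intro!: omul_Omega oone_Omega simp: Omega_closed tests_def)

definition ogen :: "nat set \<Rightarrow> nat \<Rightarrow> pw" where
  "ogen A c = (\<lambda>T f. if (T, f) \<in> tests A then f c else undefined)"

lemma ogen_tests [simp]: "(T, f) \<in> tests A \<Longrightarrow> ogen A c T f = f c"
  by (simp add: ogen_def)

lemma ogen_Omega: "c \<in> A \<Longrightarrow> ogen A c \<in> Omega A"
proof (rule OmegaI)
  fix T f T' h assume "(T, f) \<in> tests A" "monoid T'" "finite (carrier T')" "mhom h T T'"
  thus "ogen A c T' (h \<circ> f) = h (ogen A c T f)" using tests_mhom by simp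
qed (auto simp: ogen_def tests_def)

definition opointwise :: "nat set \<Rightarrow> (nat monoid \<Rightarrow> nat \<Rightarrow> nat) \<Rightarrow> pw \<Rightarrow> pw" where
  "opointwise A \<phi> u = (\<lambda>T f. if (T, f) \<in> tests A then \<phi> T (u T f) else undefined)"

lemma opointwise_tests [simp]: "(T, f) \<in> tests A \<Longrightarrow> opointwise A \<phi> u T f = \<phi> T (u T f)"
  by (simp add: opointwise_def)

lemma opointwise_Omega:
  assumes u: "u \<in> Omega A"
    and closed: "\<And>T x. monoid T \<Longrightarrow> finite (carrier T) \<Longrightarrow> x \<in> carrier T \<Longrightarrow> \<phi> T x \<in> carrier T"
    and natural: "\<And>T T' h x. monoid T \<Longrightarrow> finite (carrier T) \<Longrightarrow> monoid T' \<Longrightarrow> finite (carrier T')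
        \<Longrightarrow> mhom h T T' \<Longrightarrow> x \<in> carrier T \<Longrightarrow> h (\<phi> T x) = \<phi> T' (h x)"
  shows "opointwise A \<phi> u \<in> Omega A"
proof (rule OmegaI)
  fix T f T' h assume t: "(T, f) \<in> tests A" and T': "monoid T'" "finite (carrier T')" "mhom h T T'"
  have T: "monoid T" "finite (carrier T)" using t by (auto simp: tests_def)
  have "u T' (h \<circ> f) = h (u T f)" by (rule Omega_mhom[OF u t T'])
  thus "opointwise A \<phi> u T' (h \<circ> f) = h (opointwise A \<phi> u T f)"
    using t tests_mhom[OF t T'] natural[OF T T' Omega_closed[OF u t]] by simp
next
  fix T and f g :: "nat \<Rightarrow> nat"
  assume "\<forall>a\<in>A. f a = g a" "(T, f) \<in> tests A" "(T, g) \<in> tests A"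
  thus "opointwise A \<phi> u T f = opointwise A \<phi> u T g"
    using Omega_cong[OF u, of f g T] by (simp add: opointwise_def)
qed (use u closed in \<open>auto simp: opointwise_def tests_def Omega_closed\<close>)

abbreviation oomega :: "nat set \<Rightarrow> pw \<Rightarrow> pw" where
  "oomega A \<equiv> opointwise A omega_pow"

abbreviation oomega_pred :: "nat set \<Rightarrow> pw \<Rightarrow> pw" where
  "oomega_pred A \<equiv> opointwise A omega_pred_pow"

definition opow :: "nat set \<Rightarrow> pw \<Rightarrow> nat \<Rightarrow> pw" where
  "opow A u k = opointwise A (\<lambda>T x. x [^]\<^bsub>T\<^esub> k) u"

lemma opow_tests [simp]: "(T, f) \<in> tests A \<Longrightarrow> opow A u k T f = u T f [^]\<^bsub>T\<^esub> k"
  by (simp add: opow_def)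

lemma omega_pow_closed: "monoid M \<Longrightarrow> x \<in> carrier M \<Longrightarrow> omega_pow M x \<in> carrier M"
  by (simp add: omega_pow_def monoid.nat_pow_closed)

lemma omega_pred_pow_closed: "monoid M \<Longrightarrow> x \<in> carrier M \<Longrightarrow> omega_pred_pow M x \<in> carrier M"
  by (simp add: omega_pred_pow_def monoid.nat_pow_closed)

lemma oomega_Omega: "u \<in> Omega A \<Longrightarrow> oomega A u \<in> Omega A"
  by (rule opointwise_Omega) (simp_all add: omega_pow_closed mhom_omega_pow)

lemma oomega_pred_Omega: "u \<in> Omega A \<Longrightarrow> oomega_pred A u \<in> Omega A"
  by (rule opointwise_Omega) (simp_all add: omega_pred_pow_closed mhom_omega_pow)

lemma opow_Omega: "u \<in> Omega A \<Longrightarrow> opow A u k \<in> Omega A"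
  unfolding opow_def by (rule opointwise_Omega) (auto simp: monoid.nat_pow_closed mhom_nat_pow)

lemma opow_1: "u \<in> Omega A \<Longrightarrow> opow A u (Suc 0) = u"
  by (rule Omega_eqI[OF opow_Omega]) (auto simp: tests_def Omega_closed monoid.l_one)

lemma opow_Suc: "u \<in> Omega A \<Longrightarrow> opow A u (Suc k) = omul A (opow A u k) u"
  by (rule Omega_eqI[OF opow_Omega omul_Omega[OF opow_Omega]]) simp_all

lemma oomega_pred_oone: "oomega_pred A (oone A) = oone A"
  by (rule Omega_eqI) (auto intro!: oomega_pred_Omega oone_Omega
      simp: omega_pred_pow_def tests_def monoid.nat_pow_one)

lemma omul_oomega_pred: 
  assumes x: "x \<in> Omega A" 
  shows "omul A x (oomega_pred A x) = oomega A x"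
proof (rule Omega_eqI)
  fix T f assume t: "(T, f) \<in> tests A"
  hence T: "monoid T" "finite (carrier T)" by (auto simp: tests_def)
  have xc: "x T f \<in> carrier T" using Omega_closed[OF x t] .
  let ?N = "fact (card (carrier T)) :: nat"
  have exp: "Suc (2 * ?N - 1) = ?N + ?N" using fact_ge_1[of "card (carrier T)"] by simp
  have "x T f \<otimes>\<^bsub>T\<^esub> x T f [^]\<^bsub>T\<^esub> (2 * ?N - 1) = x T f [^]\<^bsub>T\<^esub> Suc (2 * ?N - 1)"
    by (rule monoid.nat_pow_Suc2[OF T(1) xc, symmetric])
  also have "\<dots> = x T f [^]\<^bsub>T\<^esub> ?N \<otimes>\<^bsub>T\<^esub> x T f [^]\<^bsub>T\<^esub> ?N"
    unfolding exp by (rule monoid.nat_pow_mult[OF T(1) xc, symmetric])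
  also have "\<dots> = x T f [^]\<^bsub>T\<^esub> ?N" by (rule monoid.nat_pow_fact_idem[OF T xc])
  finally show "omul A x (oomega_pred A x) T f = oomega A x T f"
    using t by (simp add: omega_pred_pow_def omega_pow_def)
qed (use x in \<open>auto intro!: omul_Omega oomega_pred_Omega oomega_Omega\<close>)


lemma finite_monoid_iso_nat:
  fixes M :: "('a, 'b) monoid_scheme"
  assumes M: "monoid M" and fin: "finite (carrier M)"
  obtains T :: "nat monoid" and \<iota> where "monoid T" "finite (carrier T)" "carrier T = \<iota> ` carrier M"
    "inj_on \<iota> (carrier M)" "\<And>x y. x \<in> carrier M \<Longrightarrow> y \<in> carrier M \<Longrightarrow> \<iota> (x \<otimes>\<^bsub>M\<^esub> y) = \<iota> x \<otimes>\<^bsub>T\<^esub> \<iota> y"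
    "\<iota> \<one>\<^bsub>M\<^esub> = \<one>\<^bsub>T\<^esub>"
proof -
  obtain \<iota> :: "'a \<Rightarrow> nat" where \<iota>: "inj_on \<iota> (carrier M)"
    using finite_imp_inj_to_nat_seg[OF fin] by blast
  let ?r = "inv_into (carrier M) \<iota>"
  define T :: "nat monoid" where
    "T = \<lparr>carrier = \<iota> ` carrier M, mult = (\<lambda>a b. \<iota> (?r a \<otimes>\<^bsub>M\<^esub> ?r b)), one = \<iota> \<one>\<^bsub>M\<^esub>\<rparr>"
  have r: "\<And>x. x \<in> carrier M \<Longrightarrow> ?r (\<iota> x) = x" using \<iota> by (simp add: inv_into_f_f)
  have "monoid T"
  proof (rule monoidI)
    fix x y z assume "x \<in> carrier T" "y \<in> carrier T" "z \<in> carrier T"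
    thus "x \<otimes>\<^bsub>T\<^esub> y \<otimes>\<^bsub>T\<^esub> z = x \<otimes>\<^bsub>T\<^esub> (y \<otimes>\<^bsub>T\<^esub> z)"
      by (auto simp: T_def r monoid.m_closed[OF M] monoid.m_assoc[OF M])
  qed (auto simp: T_def r monoid.m_closed[OF M] monoid.one_closed[OF M] monoid.l_one[OF M]
      monoid.r_one[OF M])
  moreover have "finite (carrier T)" using fin by (simp add: T_def)
  ultimately show ?thesis using that \<iota> by (simp add: T_def r)
qed

definition word_eval :: "nat monoid \<Rightarrow> (nat \<Rightarrow> nat) \<Rightarrow> nat set \<Rightarrow> nat list \<Rightarrow> nat" where
  "word_eval T f A l = foldr (\<lambda>c acc. f c \<otimes>\<^bsub>T\<^esub> acc) (filter (\<lambda>c. c \<in> A) l) \<one>\<^bsub>T\<^esub>"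

definition oword :: "nat set \<Rightarrow> nat list \<Rightarrow> pw" where
  "oword A l = foldr (\<lambda>c acc. omul A (ogen A c) acc) (filter (\<lambda>c. c \<in> A) l) (oone A)"

lemma word_eval_Nil [simp]: "word_eval T f A [] = \<one>\<^bsub>T\<^esub>"
  by (simp add: word_eval_def)

lemma word_eval_Cons:
  "word_eval T f A (c # l) = (if c \<in> A then f c \<otimes>\<^bsub>T\<^esub> word_eval T f A l else word_eval T f A l)"
  by (simp add: word_eval_def)

lemma oword_Nil [simp]: "oword A [] = oone A"
  by (simp add: oword_def)

lemma oword_Cons: "oword A (c # l) = (if c \<in> A then omul A (ogen A c) (oword A l) else oword A l)"
  by (simp add: oword_def)

lemma word_eval_closed: "(T, f) \<in> tests A \<Longrightarrow> word_eval T f A l \<in> carrier T"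
  by (induction l) (auto simp: word_eval_Cons tests_def monoid.m_closed)

lemma word_eval_append:
  "(T, f) \<in> tests A \<Longrightarrow> word_eval T f A (l1 @ l2) = word_eval T f A l1 \<otimes>\<^bsub>T\<^esub> word_eval T f A l2"
proof (induction l1)
  case (Cons c l)
  thus ?case using word_eval_closed[OF Cons.prems] by (auto simp: word_eval_Cons tests_def monoid.m_assoc)
qed (use word_eval_closed in \<open>simp add: tests_def\<close>)

lemma word_eval_singleton: "(T, f) \<in> tests A \<Longrightarrow> c \<in> A \<Longrightarrow> word_eval T f A [c] = f c"
  by (auto simp: word_eval_Cons tests_def)

lemma oword_Omega: "oword A l \<in> Omega A"
  by (induction l) (auto simp: oword_def oword_Cons intro: omul_Omega oone_Omega ogen_Omega)

lemma oword_tests: "(T, f) \<in> tests A \<Longrightarrow> oword A l T f = word_eval T f A l"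
  by (induction l) (auto simp: oword_def oword_Cons word_eval_Cons)

definition word_profiles ::
    "nat set \<Rightarrow> (nat monoid \<times> (nat \<Rightarrow> nat)) set \<Rightarrow> ((nat monoid \<times> (nat \<Rightarrow> nat)) \<Rightarrow> nat) monoid" where
  "word_profiles A G =
     \<lparr>carrier = range (\<lambda>l. restrict (\<lambda>g. word_eval (fst g) (snd g) A l) G),
      mult = (\<lambda>x y. restrict (\<lambda>g. x g \<otimes>\<^bsub>fst g\<^esub> y g) G),
      one = restrict (\<lambda>g. \<one>\<^bsub>fst g\<^esub>) G\<rparr>"

context
  fixes A G assumes G: "finite G" "G \<subseteq> tests A"
begin

abbreviation profile :: "nat list \<Rightarrow> (nat monoid \<times> (nat \<Rightarrow> nat)) \<Rightarrow> nat" where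
  "profile l \<equiv> restrict (\<lambda>g. word_eval (fst g) (snd g) A l) G"

lemma profile_mult: "profile l1 \<otimes>\<^bsub>word_profiles A G\<^esub> profile l2 = profile (l1 @ l2)"
  unfolding word_profiles_def using G by (simp, intro restrict_ext) (auto simp: word_eval_append)

lemma profile_one: "\<one>\<^bsub>word_profiles A G\<^esub> = profile []"
  by (simp add: word_profiles_def)

lemma word_profiles_carrier: "carrier (word_profiles A G) = range profile"
  by (simp add: word_profiles_def)

lemma word_profiles_monoid: "monoid (word_profiles A G)"
proof (rule monoidI)
  fix x y z assume "x \<in> carrier (word_profiles A G)" "y \<in> carrier (word_profiles A G)"
    "z \<in> carrier (word_profiles A G)"
  thus "x \<otimes>\<^bsub>word_profiles A G\<^esub> y \<otimes>\<^bsub>word_profiles A G\<^esub> z =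
      x \<otimes>\<^bsub>word_profiles A G\<^esub> (y \<otimes>\<^bsub>word_profiles A G\<^esub> z)"
    unfolding word_profiles_carrier by (auto simp: profile_mult)
qed (auto simp: word_profiles_carrier profile_mult profile_one simp del: word_eval_Nil)

lemma word_profiles_finite: "finite (carrier (word_profiles A G))"
proof (rule finite_subset)
  show "carrier (word_profiles A G) \<subseteq> PiE G (\<lambda>g. carrier (fst g))"
    using G word_eval_closed by (force simp: word_profiles_carrier)
  show "finite (PiE G (\<lambda>g. carrier (fst g)))" using G by (intro finite_PiE) (auto simp: tests_def)
qed

end

text \<open>The word is read off from \<open>z\<close> on a copy over \<open>nat\<close> of the monoid of word profiles,
  with each letter sent to its own profile.\<close>
lemma Omega_eq_word:
  assumes z: "z \<in> Omega A" and G: "finite G" "G \<subseteq> tests A"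
  shows "\<exists>l. \<forall>(T, f)\<in>G. z T f = word_eval T f A l"
proof -
  let ?P = "word_profiles A G" and ?w = "profile A G"
  obtain M :: "nat monoid" and \<iota> where M: "monoid M" "finite (carrier M)" "carrier M = \<iota> ` carrier ?P"
    "inj_on \<iota> (carrier ?P)" "\<And>x y. x \<in> carrier ?P \<Longrightarrow> y \<in> carrier ?P \<Longrightarrow> \<iota> (x \<otimes>\<^bsub>?P\<^esub> y) = \<iota> x \<otimes>\<^bsub>M\<^esub> \<iota> y"
    "\<iota> \<one>\<^bsub>?P\<^esub> = \<one>\<^bsub>M\<^esub>"
    by (rule finite_monoid_iso_nat[OF word_profiles_monoid[OF G] word_profiles_finite[OF G]]) (rule that)
  define f' where "f' c = \<iota> (?w [c])" for c
  have tM: "(M, f') \<in> tests A" using M(1-3) by (auto simp: tests_def f'_def word_profiles_carrier[OF G])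
  obtain l where l: "z M f' = \<iota> (?w l)"
    using Omega_closed[OF z tM] M(3) G by (auto simp: word_profiles_carrier[OF G])
  have "z T f = word_eval T f A l" if g: "(T, f) \<in> G" for T f
  proof -
    have t: "(T, f) \<in> tests A" using g G by auto
    define p where "p m = inv_into (carrier ?P) \<iota> m (T, f)" for m
    have p: "p (\<iota> (?w l')) = word_eval T f A l'" for l'
      using M(4) g G by (simp add: p_def word_profiles_carrier[OF G] inv_into_f_f)
    have hom: "mhom p M T"
      unfolding mhom_def
    proof (intro conjI ballI)
      show "p \<in> carrier M \<rightarrow> carrier T"
        using M(3) p word_eval_closed[OF t] G by (auto simp: word_profiles_carrier[OF G])
    next
      fix x y assume "x \<in> carrier M" "y \<in> carrier M"
      then obtain l1 l2 where xy: "x = \<iota> (?w l1)" "y = \<iota> (?w l2)"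
        using M(3) G by (auto simp: word_profiles_carrier[OF G])
      have "x \<otimes>\<^bsub>M\<^esub> y = \<iota> (?w (l1 @ l2))"
        unfolding xy profile_mult[OF G, symmetric] using G by (simp add: M(5) word_profiles_carrier[OF G])
      thus "p (x \<otimes>\<^bsub>M\<^esub> y) = p x \<otimes>\<^bsub>T\<^esub> p y" using xy p word_eval_append[OF t] by simp
    next
      show "p \<one>\<^bsub>M\<^esub> = \<one>\<^bsub>T\<^esub>"
        using M(6) p[of "[]"] profile_one[OF G] by simp
    qed
    have "\<forall>c\<in>A. (p \<circ> f') c = f c" using p word_eval_singleton[OF t] by (simp add: f'_def)
    hence "z T (p \<circ> f') = z T f" by (rule Omega_cong[OF z])
    moreover have "z T (p \<circ> f') = p (z M f')" using Omega_mhom[OF z tM _ _ hom] t by (simp add: tests_def)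
    ultimately show ?thesis using l p by simp
  qed
  thus ?thesis by blast
qed

section \<open>Continuous homomorphisms\<close>

lemma agree_refl: "agree F x x"
  unfolding agree_def by auto

lemma agree_mono: "agree F u v \<Longrightarrow> G \<subseteq> F \<Longrightarrow> agree G u v"
  unfolding agree_def by blast

lemma agree_omul:
  assumes "agree F x x'" "agree F y y'" "F \<subseteq> tests A"
  shows "agree F (omul A x y) (omul A x' y')"
  unfolding agree_def
proof clarify
  fix T f assume "(T, f) \<in> F"
  with assms have "x T f = x' T f" "y T f = y' T f" "(T, f) \<in> tests A" by (auto simp: agree_def)
  thus "omul A x y T f = omul A x' y' T f" by simp
qed

lemma cont_hom_fin_closed: "cont_hom_fin A T \<psi> \<Longrightarrow> z \<in> Omega A \<Longrightarrow> \<psi> z \<in> carrier T"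
  unfolding cont_hom_fin_def by blast

lemma cont_hom_fin_omul:
  "cont_hom_fin A T \<psi> \<Longrightarrow> u \<in> Omega A \<Longrightarrow> v \<in> Omega A \<Longrightarrow> \<psi> (omul A u v) = \<psi> u \<otimes>\<^bsub>T\<^esub> \<psi> v"
  unfolding cont_hom_fin_def by blast

lemma cont_hom_fin_oone: "cont_hom_fin A T \<psi> \<Longrightarrow> \<psi> (oone A) = \<one>\<^bsub>T\<^esub>"
  unfolding cont_hom_fin_def by blast

lemma cont_hom_fin_continuous:
  assumes "cont_hom_fin A T \<psi>" "u \<in> Omega A"
  obtains F where "finite F" "F \<subseteq> tests A" "\<And>u'. u' \<in> Omega A \<Longrightarrow> agree F u u' \<Longrightarrow> \<psi> u' = \<psi> u"
proof -
  have "\<exists>F. finite F \<and> F \<subseteq> tests A \<and> (\<forall>u'\<in>Omega A. agree F u u' \<longrightarrow> \<psi> u' = \<psi> u)"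
    using assms unfolding cont_hom_fin_def by blast
  thus ?thesis using that by auto
qed

text \<open>By continuity, both homomorphisms are constant near \<open>z\<close>, and by density a word lies
  there, on which they agree.\<close>
lemma cont_hom_fin_eqI:
  assumes \<psi>1: "cont_hom_fin A T \<psi>1" and \<psi>2: "cont_hom_fin A T \<psi>2"
    and gen: "\<And>c. c \<in> A \<Longrightarrow> \<psi>1 (ogen A c) = \<psi>2 (ogen A c)" and z: "z \<in> Omega A"
  shows "\<psi>1 z = \<psi>2 z"
proof -
  obtain F1 where F1: "finite F1" "F1 \<subseteq> tests A" "\<And>u'. u' \<in> Omega A \<Longrightarrow> agree F1 z u' \<Longrightarrow> \<psi>1 u' = \<psi>1 z"
    using cont_hom_fin_continuous[OF \<psi>1 z] by blast
  obtain F2 where F2: "finite F2" "F2 \<subseteq> tests A" "\<And>u'. u' \<in> Omega A \<Longrightarrow> agree F2 z u' \<Longrightarrow> \<psi>2 u' = \<psi>2 z"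
    using cont_hom_fin_continuous[OF \<psi>2 z] by blast
  obtain l where l: "\<forall>(T, f)\<in>F1 \<union> F2. z T f = word_eval T f A l"
    using Omega_eq_word[OF z, of "F1 \<union> F2"] F1 F2 by auto
  have "agree (F1 \<union> F2) z (oword A l)"
    unfolding agree_def using l F1(2) F2(2) oword_tests by fastforce
  hence "agree F1 z (oword A l)" "agree F2 z (oword A l)" by (auto intro: agree_mono)
  hence "\<psi>1 z = \<psi>1 (oword A l)" "\<psi>2 z = \<psi>2 (oword A l)"
    using F1(3) F2(3) oword_Omega by simp_all
  moreover have "\<psi>1 (oword A l) = \<psi>2 (oword A l)"
    by (induction l) (simp_all add: oword_Cons gen oword_Omega ogen_Omega cont_hom_fin_oone[OF \<psi>1]
        cont_hom_fin_oone[OF \<psi>2] cont_hom_fin_omul[OF \<psi>1] cont_hom_fin_omul[OF \<psi>2])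
  ultimately show ?thesis by simp
qed

lemma cont_hom_fin_eval:
  assumes t: "(T, f) \<in> tests A"
  shows "cont_hom_fin A T (\<lambda>z. z T f)"
  unfolding cont_hom_fin_def
proof (intro conjI ballI)
  fix u assume "u \<in> Omega A"
  show "\<exists>F. finite F \<and> F \<subseteq> tests A \<and> (\<forall>u'\<in>Omega A. agree F u u' \<longrightarrow> u' T f = u T f)"
    using t by (intro exI[of _ "{(T, f)}"]) (auto simp: agree_def)
qed (use t Omega_closed in auto)

lemma cont_hom_Omega: "cont_hom C B \<phi> \<Longrightarrow> z \<in> Omega C \<Longrightarrow> \<phi> z \<in> Omega B"
  unfolding cont_hom_def by (simp add: Pi_iff)

lemma cont_hom_fin_comp:
  assumes \<phi>: "cont_hom C B \<phi>" and \<kappa>: "cont_hom_fin B T \<kappa>"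
  shows "cont_hom_fin C T (\<kappa> \<circ> \<phi>)"
  unfolding cont_hom_fin_def
proof (intro conjI ballI)
  show "\<kappa> \<circ> \<phi> \<in> Omega C \<rightarrow> carrier T"
    using cont_hom_Omega[OF \<phi>] cont_hom_fin_closed[OF \<kappa>] by auto
next
  fix u v assume "u \<in> Omega C" "v \<in> Omega C"
  thus "(\<kappa> \<circ> \<phi>) (omul C u v) = (\<kappa> \<circ> \<phi>) u \<otimes>\<^bsub>T\<^esub> (\<kappa> \<circ> \<phi>) v"
    using \<phi> cont_hom_fin_omul[OF \<kappa>] cont_hom_Omega[OF \<phi>] by (simp add: cont_hom_def)
next
  show "(\<kappa> \<circ> \<phi>) (oone C) = \<one>\<^bsub>T\<^esub>" using \<phi> cont_hom_fin_oone[OF \<kappa>] by (simp add: cont_hom_def)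
next
  fix u assume u: "u \<in> Omega C"
  obtain F1 where F1: "finite F1" "F1 \<subseteq> tests B"
    "\<And>u'. u' \<in> Omega B \<Longrightarrow> agree F1 (\<phi> u) u' \<Longrightarrow> \<kappa> u' = \<kappa> (\<phi> u)"
    using cont_hom_fin_continuous[OF \<kappa> cont_hom_Omega[OF \<phi> u]] by blast
  obtain F2 where F2: "finite F2" "F2 \<subseteq> tests C" "\<forall>u'\<in>Omega C. agree F2 u u' \<longrightarrow> agree F1 (\<phi> u) (\<phi> u')"
    using \<phi> u F1(1,2) unfolding cont_hom_def by meson
  show "\<exists>F. finite F \<and> F \<subseteq> tests C \<and> (\<forall>u'\<in>Omega C. agree F u u' \<longrightarrow> (\<kappa> \<circ> \<phi>) u' = (\<kappa> \<circ> \<phi>) u)"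
    using F1 F2 cont_hom_Omega[OF \<phi>] by (intro exI[of _ F2]) auto
qed

definition subst :: "nat set \<Rightarrow> (nat \<Rightarrow> pw) \<Rightarrow> pw \<Rightarrow> pw" where
  "subst B w z = (\<lambda>T f. if (T, f) \<in> tests B then z T (\<lambda>c. w c T f) else undefined)"

lemma subst_tests [simp]: "(T, f) \<in> tests B \<Longrightarrow> subst B w z T f = z T (\<lambda>c. w c T f)"
  by (simp add: subst_def)

lemma tests_subst:
  assumes "\<And>c. c \<in> C \<Longrightarrow> w c \<in> Omega B" "(T, f) \<in> tests B"
  shows "(T, \<lambda>c. w c T f) \<in> tests C"
  using assms Omega_closed[OF assms(1) assms(2)] by (auto simp: tests_def)

context
  fixes B C and w :: "nat \<Rightarrow> pw"
  assumes w: "\<And>c. c \<in> C \<Longrightarrow> w c \<in> Omega B"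
begin

lemma subst_Omega:
  assumes z: "z \<in> Omega C"
  shows "subst B w z \<in> Omega B"
proof (rule OmegaI)
  fix T f assume t: "(T, f) \<in> tests B"
  thus "subst B w z T f \<in> carrier T" using Omega_closed[OF z tests_subst[OF w t]] by simp
next
  fix T and f g :: "nat \<Rightarrow> nat"
  assume fg: "\<forall>a\<in>B. f a = g a" and t: "(T, f) \<in> tests B" "(T, g) \<in> tests B"
  have "\<forall>c\<in>C. w c T f = w c T g" using w Omega_cong fg by blast
  thus "subst B w z T f = subst B w z T g"
    using t Omega_cong[OF z, of "\<lambda>c. w c T f" "\<lambda>c. w c T g" T] by simp
next
  fix T f T' h assume t: "(T, f) \<in> tests B" and T': "monoid T'" "finite (carrier T')" "mhom h T T'"
  have "\<forall>c\<in>C. w c T' (h \<circ> f) = (h \<circ> (\<lambda>c. w c T f)) c" using w Omega_mhom[OF _ t T'] by simp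
  hence "z T' (\<lambda>c. w c T' (h \<circ> f)) = z T' (h \<circ> (\<lambda>c. w c T f))" by (rule Omega_cong[OF z])
  also have "\<dots> = h (z T (\<lambda>c. w c T f))" using Omega_mhom[OF z tests_subst[OF w t] T'] .
  finally show "subst B w z T' (h \<circ> f) = h (subst B w z T f)" using t tests_mhom[OF t T'] by simp
qed (simp add: subst_def)

lemma subst_ogen: "c \<in> C \<Longrightarrow> subst B w (ogen C c) = w c"
  by (rule Omega_eqI) (auto intro: subst_Omega ogen_Omega w simp: tests_subst[OF w])

lemma cont_hom_subst: "cont_hom C B (subst B w)"
  unfolding cont_hom_def
proof (intro conjI ballI allI impI)
  show "subst B w \<in> Omega C \<rightarrow> Omega B" using subst_Omega by blast
next
  fix u v assume "u \<in> Omega C" "v \<in> Omega C"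
  thus "subst B w (omul C u v) = omul B (subst B w u) (subst B w v)"
    by (intro Omega_eqI) (auto intro!: subst_Omega omul_Omega simp: tests_subst[OF w])
next
  show "subst B w (oone C) = oone B"
    by (rule Omega_eqI) (auto intro!: subst_Omega oone_Omega simp: tests_subst[OF w])
next
  fix u G assume u: "u \<in> Omega C" and G: "finite G \<and> G \<subseteq> tests B"
  let ?F = "(\<lambda>(T, f). (T, \<lambda>c. w c T f)) ` G"
  have "agree G (subst B w u) (subst B w u')" if "agree ?F u u'" for u'
    using that G unfolding agree_def by fastforce
  moreover have "finite ?F" "?F \<subseteq> tests C" using G tests_subst[OF w] by auto
  ultimately show "\<exists>F. finite F \<and> F \<subseteq> tests C \<and>
      (\<forall>u'\<in>Omega C. agree F u u' \<longrightarrow> agree G (subst B w u) (subst B w u'))" by blast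
qed

end

section \<open>Provability\<close>

lemma Sigma0_subset_provable: "Sigma0 Sig A \<subseteq> provable Sig A"
  unfolding provable_def by blast

lemma provable_trans: "(a, b) \<in> provable Sig A \<Longrightarrow> (b, c) \<in> provable Sig A \<Longrightarrow> (a, c) \<in> provable Sig A"
  unfolding provable_def trans_def by blast

lemma pclos_mono: "P \<subseteq> Q \<Longrightarrow> pclos A P \<subseteq> pclos A Q"
  unfolding pclos_def by blast

lemma pclos_Omega: "pclos A P \<subseteq> Omega A \<times> Omega A"
  unfolding pclos_def by blast

lemma pclos_provable: "pclos A (provable Sig A) \<subseteq> provable Sig A"
  unfolding provable_def using pclos_mono[of "\<Inter> {P. Sigma0 Sig A \<subseteq> P \<and> trans P \<and> pclos A P \<subseteq> P}"]
  by blast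

lemma provable_induct:
  "Sigma0 Sig A \<subseteq> P \<Longrightarrow> trans P \<Longrightarrow> pclos A P \<subseteq> P \<Longrightarrow> provable Sig A \<subseteq> P"
  unfolding provable_def by blast

lemma provable_approxI:
  assumes "a \<in> Omega A" "b \<in> Omega A"
    and "\<And>F. finite F \<Longrightarrow> F \<subseteq> tests A \<Longrightarrow> \<exists>a' b'. (a', b') \<in> provable Sig A \<and> agree F a a' \<and> agree F b b'"
  shows "(a, b) \<in> provable Sig A"
proof -
  have "(a, b) \<in> pclos A (provable Sig A)" unfolding pclos_def using assms by fastforce
  thus ?thesis using pclos_provable by blast
qed

lemma cont_hom_const_oone: "cont_hom C A (\<lambda>z. oone A)"
  unfolding cont_hom_def by (auto simp: oone_Omega agree_def omul_oone_left)

locale pseudoidentity_system =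
  fixes Sig :: "(nat set \<times> pw \<times> pw) set"
  assumes Sig_Omega: "\<forall>(B, u, v)\<in>Sig. finite B \<and> u \<in> Omega B \<and> v \<in> Omega B"
begin

lemma Sigma0I:
  assumes "(B, u, v) \<in> Sig \<or> (B, v, u) \<in> Sig" "cont_hom B A \<phi>" "mvars t \<subseteq> {..length ws}"
    "set ws \<subseteq> Omega A"
  shows "(teval A (case_nat (\<phi> u) (\<lambda>i. ws ! i)) t, teval A (case_nat (\<phi> v) (\<lambda>i. ws ! i)) t) \<in> Sigma0 Sig A"
  unfolding Sigma0_def mem_Collect_eq
  by (intro exI[of _ B] exI[of _ u] exI[of _ v] exI[of _ \<phi>] exI[of _ t] exI[of _ ws]) (simp add: assms)

lemma Sigma0E:
  assumes "(a, b) \<in> Sigma0 Sig A"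
  obtains B u v \<phi> t ws where "a = teval A (case_nat (\<phi> u) (\<lambda>i. ws ! i)) t"
    "b = teval A (case_nat (\<phi> v) (\<lambda>i. ws ! i)) t" "(B, u, v) \<in> Sig \<or> (B, v, u) \<in> Sig"
    "cont_hom B A \<phi>" "mvars t \<subseteq> {..length ws}" "set ws \<subseteq> Omega A"
  using assms unfolding Sigma0_def mem_Collect_eq by (elim exE conjE) (rule that, simp_all)

lemma teval_Omega: "(\<And>i. i \<in> mvars t \<Longrightarrow> \<sigma> i \<in> Omega A) \<Longrightarrow> teval A \<sigma> t \<in> Omega A"
  by (induction t) (auto intro: omul_Omega oone_Omega)

lemma Sigma0_Omega:
  assumes "(a, b) \<in> Sigma0 Sig A"
  shows "a \<in> Omega A" "b \<in> Omega A"
proof -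
  obtain B u v \<phi> t ws where d: "a = teval A (case_nat (\<phi> u) (\<lambda>i. ws ! i)) t"
    "b = teval A (case_nat (\<phi> v) (\<lambda>i. ws ! i)) t" "(B, u, v) \<in> Sig \<or> (B, v, u) \<in> Sig"
    "cont_hom B A \<phi>" "mvars t \<subseteq> {..length ws}" "set ws \<subseteq> Omega A"
    using assms by (rule Sigma0E)
  have "u \<in> Omega B" "v \<in> Omega B" using d(3) Sig_Omega by auto
  hence "\<phi> u \<in> Omega A" "\<phi> v \<in> Omega A" using cont_hom_Omega[OF d(4)] by auto
  hence "case_nat (\<phi> x) (\<lambda>i. ws ! i) i \<in> Omega A" if "i \<in> mvars t" "x \<in> {u, v}" for x i
    using that d(5,6) by (auto split: nat.split simp: subset_iff)
  thus "a \<in> Omega A" "b \<in> Omega A" unfolding d(1,2) by (auto intro: teval_Omega)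
qed

lemma Sigma0_sym:
  assumes "(a, b) \<in> Sigma0 Sig A"
  shows "(b, a) \<in> Sigma0 Sig A"
proof -
  obtain B u v \<phi> t ws where d: "a = teval A (case_nat (\<phi> u) (\<lambda>i. ws ! i)) t"
    "b = teval A (case_nat (\<phi> v) (\<lambda>i. ws ! i)) t" "(B, u, v) \<in> Sig \<or> (B, v, u) \<in> Sig"
    "cont_hom B A \<phi>" "mvars t \<subseteq> {..length ws}" "set ws \<subseteq> Omega A"
    using assms by (rule Sigma0E)
  have "(B, v, u) \<in> Sig \<or> (B, u, v) \<in> Sig" using d(3) by blast
  from Sigma0I[OF this d(4-6)] show ?thesis by (simp only: d(1,2))
qed

lemma Sigma0_instance: "(B, u, v) \<in> Sig \<Longrightarrow> cont_hom B A \<phi> \<Longrightarrow> (\<phi> u, \<phi> v) \<in> Sigma0 Sig A"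
  using Sigma0I[of B u v A \<phi> "MVar 0" "[]"] by simp

lemma Sigma0_refl:
  assumes "Sig \<noteq> {}" and "w \<in> Omega A"
  shows "(w, w) \<in> Sigma0 Sig A"
proof -
  obtain B u v where "(B, u, v) \<in> Sig" using assms(1) by auto
  thus ?thesis using Sigma0I[OF _ cont_hom_const_oone, of B u v "MVar 1" "[w]"] assms(2) by simp
qed

lemma teval_cong: "(\<And>i. i \<in> mvars t \<Longrightarrow> \<sigma> i = \<tau> i) \<Longrightarrow> teval A \<sigma> t = teval A \<tau> t"
  by (induction t) auto

text \<open>Multiplying by context elements \<open>c\<close>, \<open>d\<close> wraps the term into
  \<open>c \<cdot> t \<cdot> d\<close>, with \<open>c\<close> and \<open>d\<close> appended to the parameters.\<close>
lemma Sigma0_context: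
  assumes ab: "(a, b) \<in> Sigma0 Sig A" and c: "c \<in> Omega A" and d: "d \<in> Omega A"
  shows "(omul A (omul A c a) d, omul A (omul A c b) d) \<in> Sigma0 Sig A"
proof -
  obtain B u v \<phi> t ws where D: "a = teval A (case_nat (\<phi> u) (\<lambda>i. ws ! i)) t"
    "b = teval A (case_nat (\<phi> v) (\<lambda>i. ws ! i)) t" "(B, u, v) \<in> Sig \<or> (B, v, u) \<in> Sig"
    "cont_hom B A \<phi>" "mvars t \<subseteq> {..length ws}" "set ws \<subseteq> Omega A"
    using ab by (rule Sigma0E)
  let ?m = "length ws"
  let ?t = "MMul (MMul (MVar (Suc ?m)) t) (MVar (Suc (Suc ?m)))"
  have e: "teval A (case_nat x (\<lambda>i. (ws @ [c, d]) ! i)) t = teval A (case_nat x (\<lambda>i. ws ! i)) t" for x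
    using D(5) by (intro teval_cong) (auto split: nat.split simp: nth_append)
  have "mvars ?t \<subseteq> {..length (ws @ [c, d])}" "set (ws @ [c, d]) \<subseteq> Omega A"
    using D(5,6) c d by auto
  from Sigma0I[OF D(3,4) this]
  have "(teval A (case_nat (\<phi> u) (\<lambda>i. (ws @ [c, d]) ! i)) ?t,
         teval A (case_nat (\<phi> v) (\<lambda>i. (ws @ [c, d]) ! i)) ?t) \<in> Sigma0 Sig A" .
  moreover have "teval A (case_nat (\<phi> u) (\<lambda>i. (ws @ [c, d]) ! i)) ?t = omul A (omul A c a) d"
    using e D(1) by (simp add: nth_append)
  moreover have "teval A (case_nat (\<phi> v) (\<lambda>i. (ws @ [c, d]) ! i)) ?t = omul A (omul A c b) d"
    using e D(2) by (simp add: nth_append)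
  ultimately show ?thesis by simp
qed

lemma provable_Omega:
  assumes "(a, b) \<in> provable Sig A"
  shows "a \<in> Omega A" "b \<in> Omega A"
proof -
  let ?P = "provable Sig A \<inter> Omega A \<times> Omega A"
  have "provable Sig A \<subseteq> ?P"
  proof (rule provable_induct)
    show "Sigma0 Sig A \<subseteq> ?P" using Sigma0_subset_provable Sigma0_Omega by auto
    show "trans ?P" using provable_trans unfolding trans_def by blast
    show "pclos A ?P \<subseteq> ?P"
      using pclos_provable pclos_mono[of ?P "provable Sig A" A] pclos_Omega[of A ?P] by blast
  qed
  thus "a \<in> Omega A" "b \<in> Omega A" using assms by auto
qed

lemma provable_sym:
  assumes "(a, b) \<in> provable Sig A"
  shows "(b, a) \<in> provable Sig A"
proof -
  let ?P = "{(a, b). (b, a) \<in> provable Sig A}"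
  have "provable Sig A \<subseteq> ?P"
  proof (rule provable_induct)
    show "Sigma0 Sig A \<subseteq> ?P" using Sigma0_subset_provable Sigma0_sym by blast
    show "trans ?P" using provable_trans unfolding trans_def by blast
    show "pclos A ?P \<subseteq> ?P"
    proof clarify
      fix a b assume p: "(a, b) \<in> pclos A ?P"
      show "(b, a) \<in> provable Sig A"
      proof (rule provable_approxI)
        show "b \<in> Omega A" "a \<in> Omega A" using p by (auto simp: pclos_def)
        fix F assume "finite F" "F \<subseteq> tests A"
        then obtain a' b' where "(b', a') \<in> provable Sig A" "agree F a a'" "agree F b b'"
          using p unfolding pclos_def by blast
        thus "\<exists>a'' b''. (a'', b'') \<in> provable Sig A \<and> agree F b a'' \<and> agree F a b''" by blast
      qed
    qed
  qed
  thus ?thesis using assms by blast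
qed

lemma provable_context:
  assumes ab: "(a, b) \<in> provable Sig A" and c: "c \<in> Omega A" and d: "d \<in> Omega A"
  shows "(omul A (omul A c a) d, omul A (omul A c b) d) \<in> provable Sig A"
proof -
  let ?P = "{(a, b). \<forall>c\<in>Omega A. \<forall>d\<in>Omega A.
              (omul A (omul A c a) d, omul A (omul A c b) d) \<in> provable Sig A}"
  have "provable Sig A \<subseteq> ?P"
  proof (rule provable_induct)
    show "Sigma0 Sig A \<subseteq> ?P" using Sigma0_subset_provable Sigma0_context by blast
    show "trans ?P" using provable_trans unfolding trans_def by blast
    show "pclos A ?P \<subseteq> ?P"
    proof clarify
      fix a b c d assume p: "(a, b) \<in> pclos A ?P" and c: "c \<in> Omega A" and d: "d \<in> Omega A"
      have "a \<in> Omega A" "b \<in> Omega A" using p by (auto simp: pclos_def)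
      show "(omul A (omul A c a) d, omul A (omul A c b) d) \<in> provable Sig A"
      proof (rule provable_approxI)
        show "omul A (omul A c a) d \<in> Omega A" "omul A (omul A c b) d \<in> Omega A"
          using \<open>a \<in> Omega A\<close> \<open>b \<in> Omega A\<close> c d by (auto intro: omul_Omega)
        fix F assume F: "F \<subseteq> tests A" "finite F"
        then obtain a' b' where "(a', b') \<in> ?P" "agree F a a'" "agree F b b'"
          using p unfolding pclos_def by blast
        moreover from this have "agree F (omul A (omul A c a) d) (omul A (omul A c a') d)"
          "agree F (omul A (omul A c b) d) (omul A (omul A c b') d)"
          using F by (auto intro: agree_omul agree_refl)
        ultimately show "\<exists>a'' b''. (a'', b'') \<in> provable Sig A \<and> agree F (omul A (omul A c a) d) a''
            \<and> agree F (omul A (omul A c b) d) b''"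
          using c d by blast
      qed
    qed
  qed
  thus ?thesis using ab c d by blast
qed

lemma provable_omul:
  assumes ab: "(a, b) \<in> provable Sig A" and cd: "(c, d) \<in> provable Sig A"
  shows "(omul A a c, omul A b d) \<in> provable Sig A"
proof -
  note \<Omega> = provable_Omega[OF ab] provable_Omega[OF cd]
  have "(omul A a c, omul A b c) \<in> provable Sig A"
    using provable_context[OF ab oone_Omega \<Omega>(3)] \<Omega> by (simp add: omul_oone_left)
  moreover have "(omul A b c, omul A b d) \<in> provable Sig A"
    using provable_context[OF cd \<Omega>(2) oone_Omega] \<Omega> by (simp add: omul_oone_right omul_Omega)
  ultimately show ?thesis by (rule provable_trans)
qed

lemma nonempty_provable_refl: "Sig \<noteq> {} \<Longrightarrow> w \<in> Omega A \<Longrightarrow> (w, w) \<in> provable Sig A"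
  using Sigma0_refl Sigma0_subset_provable by blast

lemma provable_opow:
  assumes "(a, b) \<in> provable Sig A" and "k \<ge> 1"
  shows "(opow A a k, opow A b k) \<in> provable Sig A"
  using \<open>k \<ge> 1\<close>
proof (induction k rule: dec_induct)
  case base
  thus ?case using assms(1) provable_Omega[OF assms(1)] by (simp add: opow_1)
next
  case (step k)
  thus ?case using provable_omul[OF step.IH assms(1)] provable_Omega[OF assms(1)] by (simp add: opow_Suc)
qed

lemma provable_opow_limit:
  assumes ab: "(a, b) \<in> provable Sig A" and "a' \<in> Omega A" "b' \<in> Omega A"
    and approx: "\<And>F. finite F \<Longrightarrow> F \<subseteq> tests A \<Longrightarrow>
        \<exists>k\<ge>1. agree F a' (opow A a k) \<and> agree F b' (opow A b k)"
  shows "(a', b') \<in> provable Sig A"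
  using assms(2,3)
proof (rule provable_approxI)
  fix F assume "finite F" "F \<subseteq> tests A"
  then obtain k where "k \<ge> 1" "agree F a' (opow A a k)" "agree F b' (opow A b k)" using approx by blast
  thus "\<exists>a'' b''. (a'', b'') \<in> provable Sig A \<and> agree F a' a'' \<and> agree F b' b''"
    using provable_opow[OF ab] by blast
qed

end

definition common_exponent :: "(nat monoid \<times> (nat \<Rightarrow> nat)) set \<Rightarrow> nat" where
  "common_exponent F = fact (\<Sum>g\<in>F. card (carrier (fst g)))"

lemma common_exponent_pos: "common_exponent F > 0"
  by (simp add: common_exponent_def)

lemma fact_card_dvd_common_exponent:
  assumes "finite F" "(T, f) \<in> F"
  shows "fact (card (carrier T)) dvd common_exponent F"
proof -
  have "card (carrier (fst (T, f))) \<le> (\<Sum>g\<in>F. card (carrier (fst g)))"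
    by (rule member_le_sum[OF assms(2) _ assms(1)]) auto
  thus ?thesis unfolding common_exponent_def by (simp add: fact_dvd)
qed

lemma agree_oomega_pred_opow:
  assumes a: "a \<in> Omega A" and F: "finite F" "F \<subseteq> tests A"
  shows "agree F (oomega_pred A a) (opow A a (2 * common_exponent F - 1))"
  unfolding agree_def
proof clarify
  fix T f assume g: "(T, f) \<in> F"
  have t: "(T, f) \<in> tests A" using g F by auto
  hence T: "monoid T" "finite (carrier T)" by (auto simp: tests_def)
  have x: "a T f \<in> carrier T" using Omega_closed[OF a t] .
  let ?L = "common_exponent F"
  have "a T f [^]\<^bsub>T\<^esub> ?L = a T f [^]\<^bsub>T\<^esub> (fact (card (carrier T)) :: nat)"
    using monoid.nat_pow_fact_dvd[OF T x fact_card_dvd_common_exponent[OF F(1) g] common_exponent_pos] .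
  hence "a T f [^]\<^bsub>T\<^esub> ?L \<otimes>\<^bsub>T\<^esub> a T f [^]\<^bsub>T\<^esub> ?L = a T f [^]\<^bsub>T\<^esub> ?L"
    using monoid.nat_pow_fact_idem[OF T x] by simp
  hence "a T f [^]\<^bsub>T\<^esub> (2 * ?L - 1) = a T f [^]\<^bsub>T\<^esub> (2 * fact (card (carrier T)) - 1 :: nat)"
    using monoid.idem_nat_pow_pred_unique[OF T(1) x _ _ _ monoid.nat_pow_fact_idem[OF T x]]
      common_exponent_pos by (simp add: Suc_leI)
  thus "oomega_pred A a T f = opow A a (2 * ?L - 1) T f"
    using t by (simp add: omega_pred_pow_def)
qed

context pseudoidentity_system begin

lemma provable_oomega_pred:
  assumes ab: "(a, b) \<in> provable Sig A"
  shows "(oomega_pred A a, oomega_pred A b) \<in> provable Sig A"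
proof (rule provable_opow_limit[OF ab])
  show "oomega_pred A a \<in> Omega A" "oomega_pred A b \<in> Omega A"
    using provable_Omega[OF ab] by (auto intro: oomega_pred_Omega)
  fix F assume "finite F" "F \<subseteq> tests A"
  thus "\<exists>k\<ge>1. agree F (oomega_pred A a) (opow A a k) \<and> agree F (oomega_pred A b) (opow A b k)"
    using agree_oomega_pred_opow provable_Omega[OF ab] common_exponent_pos[of F]
    by (intro exI[of _ "2 * common_exponent F - 1"]) auto
qed

end

section \<open>Provability of \<open>x\<^sup>\<omega> = 1\<close>\<close>

definition U1 :: "nat monoid" where
  "U1 = \<lparr>carrier = {0, 1}, mult = (*), one = 1\<rparr>"

lemma U1_monoid: "monoid U1"
  by (rule monoidI) (auto simp: U1_def)

lemma U1_finite: "finite (carrier U1)"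
  by (simp add: U1_def)

lemma U1_not_group: "\<not> group U1"
proof
  assume "group U1"
  hence "0 \<in> Units U1" using group.Units by (fastforce simp: U1_def)
  thus False by (auto simp: Units_def U1_def)
qed

definition cyclic_submonoid :: "nat monoid \<Rightarrow> nat \<Rightarrow> nat monoid" where
  "cyclic_submonoid T a = T\<lparr>carrier := range (\<lambda>k::nat. a [^]\<^bsub>T\<^esub> k)\<rparr>"

context
  fixes T :: "nat monoid" and a :: nat
  assumes T: "monoid T" and a: "a \<in> carrier T"
begin

lemma cyclic_submonoid_monoid: "monoid (cyclic_submonoid T a)"
proof (rule monoidI)
  fix x y assume "x \<in> carrier (cyclic_submonoid T a)" "y \<in> carrier (cyclic_submonoid T a)"
  thus "x \<otimes>\<^bsub>cyclic_submonoid T a\<^esub> y \<in> carrier (cyclic_submonoid T a)"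
    using monoid.nat_pow_mult[OF T a] by (auto simp: cyclic_submonoid_def)
next
  show "\<one>\<^bsub>cyclic_submonoid T a\<^esub> \<in> carrier (cyclic_submonoid T a)"
    by (auto simp: cyclic_submonoid_def intro: range_eqI[of _ _ 0])
qed (use T a in \<open>auto simp: cyclic_submonoid_def monoid.m_assoc monoid.nat_pow_closed\<close>)

lemma cyclic_submonoid_subset: "carrier (cyclic_submonoid T a) \<subseteq> carrier T"
  using T a by (auto simp: cyclic_submonoid_def monoid.nat_pow_closed)

lemma mhom_cyclic_submonoid_incl: "mhom id (cyclic_submonoid T a) T"
  using cyclic_submonoid_subset by (auto simp: mhom_def cyclic_submonoid_def)

text \<open>If no positive power of \<open>a\<close> is \<open>1\<close>, then \<open>1\<close> is not a product of non-units in
  \<open>\<langle>a\<rangle>\<close>, so the characteristic function of \<open>{1}\<close> is a homomorphism onto \<open>U\<^sub>1\<close>.\<close>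
lemma mhom_cyclic_submonoid_U1:
  assumes no_unit: "\<And>k. k \<ge> 1 \<Longrightarrow> a [^]\<^bsub>T\<^esub> (k::nat) \<noteq> \<one>\<^bsub>T\<^esub>"
  shows "mhom (\<lambda>x. if x = \<one>\<^bsub>T\<^esub> then 1 else 0) (cyclic_submonoid T a) U1"
  unfolding mhom_def
proof (intro conjI ballI)
  have one_iff: "a [^]\<^bsub>T\<^esub> (i::nat) = \<one>\<^bsub>T\<^esub> \<longleftrightarrow> i = 0" for i using no_unit[of i] by (cases i) auto
  fix x y assume "x \<in> carrier (cyclic_submonoid T a)" "y \<in> carrier (cyclic_submonoid T a)"
  then obtain i j :: nat where ij: "x = a [^]\<^bsub>T\<^esub> i" "y = a [^]\<^bsub>T\<^esub> j"
    by (auto simp: cyclic_submonoid_def)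
  have "x \<otimes>\<^bsub>cyclic_submonoid T a\<^esub> y = a [^]\<^bsub>T\<^esub> (i + j)"
    using ij monoid.nat_pow_mult[OF T a] by (simp add: cyclic_submonoid_def)
  thus "(if x \<otimes>\<^bsub>cyclic_submonoid T a\<^esub> y = \<one>\<^bsub>T\<^esub> then 1 else 0) =
      (if x = \<one>\<^bsub>T\<^esub> then 1 else 0) \<otimes>\<^bsub>U1\<^esub> (if y = \<one>\<^bsub>T\<^esub> then 1 else 0)"
    using ij one_iff by (simp add: U1_def)
qed (auto simp: U1_def cyclic_submonoid_def)

lemma nat_pow_pow_omega_pow:
  assumes fin: "finite (carrier T)" and L: "fact (card (carrier T)) dvd (L::nat)" "L > 0"
    and "j \<ge> 1 \<or> (\<exists>k\<ge>1. a [^]\<^bsub>T\<^esub> (k::nat) = \<one>\<^bsub>T\<^esub>)"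
  shows "(a [^]\<^bsub>T\<^esub> (j::nat)) [^]\<^bsub>T\<^esub> L = omega_pow T a"
proof (cases "j \<ge> 1")
  case True
  have "(a [^]\<^bsub>T\<^esub> j) [^]\<^bsub>T\<^esub> L = a [^]\<^bsub>T\<^esub> (j * L)" using monoid.nat_pow_pow[OF T a] by simp
  also have "\<dots> = omega_pow T a" unfolding omega_pow_def
    using monoid.nat_pow_fact_dvd[OF T fin a, of "j * L"] L True by simp
  finally show ?thesis .
next
  case False
  then obtain k :: nat where k: "k \<ge> 1" "a [^]\<^bsub>T\<^esub> k = \<one>\<^bsub>T\<^esub>" using assms(4) by blast
  have "a [^]\<^bsub>T\<^esub> k \<otimes>\<^bsub>T\<^esub> a [^]\<^bsub>T\<^esub> k = a [^]\<^bsub>T\<^esub> k" using k T by (simp add: monoid.l_one monoid.one_closed)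
  hence "omega_pow T a = a [^]\<^bsub>T\<^esub> k" unfolding omega_pow_def
    using monoid.idem_nat_pow_unique[OF T a _ k(1) monoid.nat_pow_fact_idem[OF T fin a]] by simp
  moreover have "j = 0" using False by simp
  ultimately show ?thesis using k T by (simp add: monoid.nat_pow_one)
qed

end

text \<open>At the substituted point, \<open>p\<close> and \<open>q\<close> take their results in \<open>\<langle>a\<rangle>\<close>. Unless \<open>\<langle>a\<rangle>\<close> is a
  group, it maps onto \<open>U\<^sub>1\<close> compatibly with \<open>g\<close>, which forces \<open>p\<close> to give a positive power of \<open>a\<close>
  and \<open>q\<close> to give \<open>1\<close>.\<close>
lemma U1_separation_power:
  assumes p: "p \<in> Omega C" and q: "q \<in> Omega C" and g: "(U1, g) \<in> tests C"
    and pq: "p U1 g = 0" "q U1 g = 1"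
    and T: "monoid T" "finite (carrier T)" and a: "a \<in> carrier T"
    and L: "fact (card (carrier T)) dvd (L::nat)" "L > 0"
    and f': "\<And>c. f' c = (if g c = 0 then a else \<one>\<^bsub>T\<^esub>)"
  shows "p T f' [^]\<^bsub>T\<^esub> L = omega_pow T a \<and> q T f' [^]\<^bsub>T\<^esub> L = \<one>\<^bsub>T\<^esub>"
proof -
  let ?M = "cyclic_submonoid T a"
  have "a \<in> carrier ?M" "\<one>\<^bsub>T\<^esub> \<in> carrier ?M"
    unfolding cyclic_submonoid_def by (auto intro: range_eqI[of _ _ 1] range_eqI[of _ _ 0] simp: T(1) a)
  hence tM: "(?M, f') \<in> tests C"
    using cyclic_submonoid_monoid[OF T(1) a] cyclic_submonoid_subset[OF T(1) a] T(2)
    by (auto simp: tests_def f' cyclic_submonoid_def intro: finite_subset)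
  have in_M: "z T f' = z ?M f' \<and> z ?M f' \<in> carrier ?M" if "z \<in> Omega C" for z
    using Omega_mhom[OF that tM T mhom_cyclic_submonoid_incl[OF T(1) a]] Omega_closed[OF that tM] by simp
  obtain jp jq :: nat where jp: "p T f' = a [^]\<^bsub>T\<^esub> jp" and jq: "q T f' = a [^]\<^bsub>T\<^esub> jq"
    using in_M[OF p] in_M[OF q] by (auto simp: cyclic_submonoid_def)
  note power = nat_pow_pow_omega_pow[OF T(1) a T(2) L]
  show ?thesis
  proof (cases "\<exists>k\<ge>1. a [^]\<^bsub>T\<^esub> (k::nat) = \<one>\<^bsub>T\<^esub>")
    case True
    hence "omega_pow T a = \<one>\<^bsub>T\<^esub>" using power[of 0] T(1) by (simp add: monoid.nat_pow_one)
    thus ?thesis using power True jp jq by simp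
  next
    case False
    define \<chi> where "\<chi> x = (if x = \<one>\<^bsub>T\<^esub> then 1 else (0::nat))" for x
    have \<chi>: "mhom \<chi> ?M U1" unfolding \<chi>_def using False by (intro mhom_cyclic_submonoid_U1[OF T(1) a]) auto
    have "a [^]\<^bsub>T\<^esub> (1::nat) = a" using T(1) a by (simp add: monoid.l_one)
    hence "a \<noteq> \<one>\<^bsub>T\<^esub>" using False by auto
    hence \<chi>_f': "\<forall>c\<in>C. (\<chi> \<circ> f') c = g c" using g by (auto simp: \<chi>_def f' tests_def U1_def)
    have "\<chi> (z T f') = z U1 g" if z: "z \<in> Omega C" for z
    proof -
      have "\<chi> (z T f') = z U1 (\<chi> \<circ> f')" using Omega_mhom[OF z tM U1_monoid U1_finite \<chi>] in_M[OF z] by simp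
      also have "\<dots> = z U1 g" using Omega_cong[OF z \<chi>_f'] .
      finally show ?thesis .
    qed
    hence "\<chi> (p T f') = 0" "\<chi> (q T f') = 1" using p q pq by simp_all
    hence "p T f' \<noteq> \<one>\<^bsub>T\<^esub>" "q T f' = \<one>\<^bsub>T\<^esub>" by (auto simp: \<chi>_def split: if_splits)
    moreover from this(1) have "jp \<ge> 1" using jp by (cases jp) auto
    ultimately show ?thesis using power jp T(1) by (simp add: monoid.nat_pow_one)
  qed
qed

locale group_system = pseudoidentity_system +
  assumes models_group: "\<forall>T\<in>models Sig. group T"
begin

lemma U1_separating_pseudoidentity:
  "\<exists>C p q g. ((C, p, q) \<in> Sig \<or> (C, q, p) \<in> Sig) \<and> p \<in> Omega C \<and> q \<in> Omega C
    \<and> (U1, g) \<in> tests C \<and> p U1 g = 0 \<and> q U1 g = 1"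
proof -
  have "U1 \<notin> models Sig" using models_group U1_not_group by blast
  then obtain C u v where s: "(C, u, v) \<in> Sig" and "\<not> psat U1 (C, u, v)"
    unfolding models_def using U1_monoid U1_finite by auto
  then obtain \<psi> where \<psi>: "cont_hom_fin C U1 \<psi>" "\<psi> u \<noteq> \<psi> v" unfolding psat_def by auto
  have uv: "u \<in> Omega C" "v \<in> Omega C" using s Sig_Omega by auto
  define g where "g c = (if c \<in> C then \<psi> (ogen C c) else 0)" for c
  have t: "(U1, g) \<in> tests C"
    using U1_monoid U1_finite cont_hom_fin_closed[OF \<psi>(1) ogen_Omega] by (auto simp: tests_def g_def)
  have "\<psi> z = z U1 g" if "z \<in> Omega C" for z
    by (rule cont_hom_fin_eqI[OF \<psi>(1) cont_hom_fin_eval[OF t] _ that]) (simp add: t g_def)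
  hence "u U1 g \<noteq> v U1 g" "u U1 g \<in> {0, 1}" "v U1 g \<in> {0, 1}"
    using uv \<psi>(2) Omega_closed[OF _ t] by (auto simp: U1_def)
  hence "u U1 g = 0 \<and> v U1 g = 1 \<or> v U1 g = 0 \<and> u U1 g = 1" by auto
  thus ?thesis
  proof
    assume "u U1 g = 0 \<and> v U1 g = 1"
    thus ?thesis using s t uv by blast
  next
    assume "v U1 g = 0 \<and> u U1 g = 1"
    thus ?thesis using s t uv by blast
  qed
qed

lemma Sig_nonempty: "Sig \<noteq> {}"
  using U1_separating_pseudoidentity by blast

lemma provable_refl: "w \<in> Omega A \<Longrightarrow> (w, w) \<in> provable Sig A"
  using nonempty_provable_refl Sig_nonempty by blast

lemma provable_oomega_oone:
  assumes y: "y \<in> Omega B"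
  shows "(oomega B y, oone B) \<in> provable Sig B"
proof -
  obtain C p q g where s: "(C, p, q) \<in> Sig \<or> (C, q, p) \<in> Sig" and pq: "p \<in> Omega C" "q \<in> Omega C"
    and g: "(U1, g) \<in> tests C" "p U1 g = 0" "q U1 g = 1"
    using U1_separating_pseudoidentity by blast
  define w where "w c = (if g c = 0 then y else oone B)" for c
  have w: "w c \<in> Omega B" for c using y oone_Omega by (simp add: w_def)
  have \<phi>: "cont_hom C B (subst B w)" by (rule cont_hom_subst) (rule w)
  have "(subst B w p, subst B w q) \<in> Sigma0 Sig B"
    using s Sigma0_instance[OF _ \<phi>] Sigma0_sym by blast
  hence prov: "(subst B w p, subst B w q) \<in> provable Sig B" using Sigma0_subset_provable by blast
  show ?thesis
  proof (rule provable_opow_limit[OF prov oomega_Omega[OF y] oone_Omega])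
    fix F assume F: "finite F" "F \<subseteq> tests B"
    let ?L = "common_exponent F"
    have pointwise: "oomega B y T f = opow B (subst B w p) ?L T f \<and> oone B T f = opow B (subst B w q) ?L T f"
      if "(T, f) \<in> F" for T f
    proof -
      have t: "(T, f) \<in> tests B" using that F by auto
      hence T: "monoid T" "finite (carrier T)" by (auto simp: tests_def)
      have "\<And>c. w c T f = (if g c = 0 then y T f else \<one>\<^bsub>T\<^esub>)" using t by (simp add: w_def)
      from U1_separation_power[OF pq g T Omega_closed[OF y t]
          fact_card_dvd_common_exponent[OF F(1) that] common_exponent_pos this]
      show ?thesis using t by (simp add: omega_pow_def)
    qed
    have "agree F (oomega B y) (opow B (subst B w p) ?L)" "agree F (oone B) (opow B (subst B w q) ?L)"
      unfolding agree_def using pointwise by fast+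
    thus "\<exists>k\<ge>1. agree F (oomega B y) (opow B (subst B w p) k) \<and> agree F (oone B) (opow B (subst B w q) k)"
      using common_exponent_pos[of F] by (intro exI[of _ ?L]) simp
  qed
qed

end

section \<open>An idempotent in the minimal ideal of every finite quotient\<close>

context monoid begin

text \<open>An idempotent \<open>f\<close> below \<open>e\<close> generating \<open>e\<close> as an ideal equals \<open>e\<close>: from
  \<open>e = a f b = a e f b\<close> one gets \<open>e = a\<^sup>n e (f b)\<^sup>n\<close>, and the idempotent power of \<open>f b\<close>
  shows \<open>e \<in> f G\<close>, whence \<open>e = f e = f\<close>.\<close>
lemma eq_if_below_idem_in_ideal:
  assumes fin: "finite (carrier G)" and e: "e \<in> carrier G" and f: "f \<in> carrier G"
    and ef: "e \<otimes> f = f" and fe: "f \<otimes> e = f" and ff: "f \<otimes> f = f"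
    and a: "a \<in> carrier G" and b: "b \<in> carrier G" and eq: "e = a \<otimes> f \<otimes> b"
  shows "e = f"
proof -
  let ?N = "fact (card (carrier G)) :: nat" and ?y = "f \<otimes> b"
  have y: "?y \<in> carrier G" using f b by simp
  have "e = a \<otimes> (e \<otimes> f) \<otimes> b" using eq ef by simp
  also have "\<dots> = a \<otimes> e \<otimes> ?y" using a e f b by (simp add: m_assoc)
  finally have step: "e = a \<otimes> e \<otimes> ?y" .
  have iter: "e = a [^] n \<otimes> e \<otimes> ?y [^] (n::nat)" for n
  proof (induction n)
    case (Suc n)
    have "e = a [^] n \<otimes> (a \<otimes> e \<otimes> ?y) \<otimes> ?y [^] n" using Suc step by simp
    also have "\<dots> = a [^] Suc n \<otimes> e \<otimes> ?y [^] Suc n"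
    proof -
      have "a [^] Suc n = a [^] n \<otimes> a" "?y [^] Suc n = ?y \<otimes> ?y [^] n"
        by (simp, rule nat_pow_Suc2[OF y])
      thus ?thesis using a e y by (simp add: m_assoc)
    qed
    finally show ?case .
  qed (use e in simp)
  have e_y: "e \<otimes> ?y [^] ?N = e"
  proof -
    let ?X = "?y [^] ?N"
    have "e \<otimes> ?X = (a [^] ?N \<otimes> e \<otimes> ?X) \<otimes> ?X" using iter[of ?N] by simp
    also have "\<dots> = a [^] ?N \<otimes> e \<otimes> (?X \<otimes> ?X)" using a e y by (simp add: m_assoc)
    also have "\<dots> = e" using nat_pow_fact_idem[OF fin y] iter[of ?N] by simp
    finally show ?thesis .
  qed
  obtain M where M: "?N = Suc M" using fact_gt_zero gr0_implies_Suc by blast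
  let ?z = "b \<otimes> ?y [^] M"
  have z: "?z \<in> carrier G" using b y by simp
  have "e = e \<otimes> (?y \<otimes> ?y [^] M)" using e_y unfolding M nat_pow_Suc2[OF y] by simp
  also have "\<dots> = f \<otimes> ?z" using ef e f b y by (simp add: m_assoc[symmetric])
  finally have "f \<otimes> e = e" using ff f z by (simp add: m_assoc[symmetric])
  thus ?thesis using fe by simp
qed

lemma principal_ideal_chain_stabilizes:
  assumes fin: "finite (carrier G)" and s: "\<And>n. s n \<in> carrier G"
    and desc: "\<And>n. \<exists>a\<in>carrier G. \<exists>b\<in>carrier G. s (Suc n) = a \<otimes> s n \<otimes> b"
  shows "\<exists>N. \<forall>n\<ge>N. \<exists>a\<in>carrier G. \<exists>b\<in>carrier G. s n = a \<otimes> s (Suc n) \<otimes> b"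
proof -
  define I where "I n = {a \<otimes> s n \<otimes> b | a b. a \<in> carrier G \<and> b \<in> carrier G}" for n
  have I_carrier: "I n \<subseteq> carrier G" for n using s by (auto simp: I_def)
  have I_Suc: "I (Suc n) \<subseteq> I n" for n
  proof
    fix y assume "y \<in> I (Suc n)"
    then obtain a b where y: "y = a \<otimes> s (Suc n) \<otimes> b" "a \<in> carrier G" "b \<in> carrier G"
      by (auto simp: I_def)
    obtain a' b' where "a' \<in> carrier G" "b' \<in> carrier G" "s (Suc n) = a' \<otimes> s n \<otimes> b'"
      using desc by blast
    hence "y = (a \<otimes> a') \<otimes> s n \<otimes> (b' \<otimes> b)" using y s by (simp add: m_assoc)
    thus "y \<in> I n" using y \<open>a' \<in> carrier G\<close> \<open>b' \<in> carrier G\<close> unfolding I_def by blast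
  qed
  have "\<exists>N. \<forall>n. card (I N) \<le> card (I n)" using ex_has_least_nat[of "\<lambda>_. True" 0 "\<lambda>n. card (I n)"] by auto
  then obtain N where N: "card (I N) \<le> card (I n)" for n by blast
  have I_N: "I n = I N" if "N \<le> n" for n
  proof (rule card_seteq)
    show "finite (I N)" using I_carrier fin by (rule finite_subset)
    show "I n \<subseteq> I N" using lift_Suc_antimono_le[of I, OF I_Suc that] .
    show "card (I N) \<le> card (I n)" by (rule N)
  qed
  have "s n \<in> I (Suc n)" if "N \<le> n" for n
  proof -
    have "s n \<in> I n" unfolding I_def using s by (intro CollectI exI[of _ \<one>]) simp
    thus ?thesis using I_N[of n] I_N[of "Suc n"] that by simp
  qed
  thus ?thesis unfolding I_def by blast
qed

lemma idem_chain_stabilizes: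
  fixes s x :: "nat \<Rightarrow> 'a"
  assumes fin: "finite (carrier G)" and s0: "s 0 \<in> carrier G" "s 0 \<otimes> s 0 = s 0"
    and x: "\<And>n. x n \<in> carrier G"
    and s_Suc: "\<And>n. s (Suc n) = (s n \<otimes> x n \<otimes> s n) [^] (fact (card (carrier G)) :: nat)"
  shows "\<exists>N. \<forall>n\<ge>N. s n = s N"
proof -
  have s: "s n \<in> carrier G \<and> s n \<otimes> s n = s n" for n
  proof (induction n)
    case (Suc n)
    hence "s n \<otimes> x n \<otimes> s n \<in> carrier G" using x by simp
    thus ?case using s_Suc nat_pow_fact_idem[OF fin] by simp
  qed (use s0 in simp)
  have below: "s n \<otimes> s (Suc n) = s (Suc n)" "s (Suc n) \<otimes> s n = s (Suc n)" for n
  proof -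
    let ?z = "s n \<otimes> x n \<otimes> s n"
    have e: "s n \<in> carrier G" "s n \<otimes> s n = s n" using s by auto
    have z: "?z \<in> carrier G" using e x by simp
    have "?z \<otimes> s n = ?z" using e x by (simp add: m_assoc)
    moreover have "s n \<otimes> ?z = ?z" using e x by (simp add: m_assoc[symmetric])
    ultimately show "s n \<otimes> s (Suc n) = s (Suc n)" "s (Suc n) \<otimes> s n = s (Suc n)"
      using nat_pow_absorb_left[OF z e(1)] nat_pow_absorb_right[OF z e(1)] s_Suc fact_ge_1 by simp_all
  qed
  have "\<exists>a\<in>carrier G. \<exists>b\<in>carrier G. s (Suc n) = a \<otimes> s n \<otimes> b" for n
    using below(1)[of n] s by (intro bexI[of _ \<one>] bexI[of _ "s (Suc n)"]) simp_all
  then obtain N where N: "\<forall>n\<ge>N. \<exists>a\<in>carrier G. \<exists>b\<in>carrier G. s n = a \<otimes> s (Suc n) \<otimes> b"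
    using principal_ideal_chain_stabilizes[OF fin] s by blast
  have stable: "s (Suc n) = s n" if "N \<le> n" for n
    using N that eq_if_below_idem_in_ideal[OF fin _ _ below(1,2)] s by metis
  have "s n = s N" if "N \<le> n" for n
    using that by (induction n rule: dec_induct) (auto simp: stable)
  thus ?thesis by blast
qed

lemma nat_pow_pred_inverse:
  assumes fin: "finite (carrier G)" and z: "z \<in> carrier G" and e: "e \<in> carrier G"
    and ez: "e \<otimes> z = z" and z_omega: "z [^] (fact (card (carrier G)) :: nat) = e"
  defines "N \<equiv> fact (card (carrier G)) :: nat"
  shows "z [^] (2 * N - 1) \<otimes> z = e" and "e \<otimes> z [^] (2 * N - 1) = z [^] (2 * N - 1)"
proof -
  have exp: "Suc (2 * N - 1) = N + N" using fact_ge_1[of "card (carrier G)"] by (simp add: N_def)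
  have "z [^] (2 * N - 1) \<otimes> z = z [^] N \<otimes> z [^] N"
    unfolding nat_pow_Suc[symmetric] exp by (rule nat_pow_mult[OF z, symmetric])
  also have "\<dots> = e" using nat_pow_fact_idem[OF fin z] z_omega by (simp add: N_def)
  finally show "z [^] (2 * N - 1) \<otimes> z = e" .
  show "e \<otimes> z [^] (2 * N - 1) = z [^] (2 * N - 1)"
    by (rule nat_pow_absorb_left[OF z e ez]) (use fact_ge_Suc_0_nat[of "card (carrier G)"] in \<open>unfold N_def, linarith\<close>)
qed

end

definition enum_word :: "nat \<Rightarrow> nat list" where
  "enum_word n = list_decode (fst (prod_decode n))"

text \<open>Every word is enumerated infinitely often: \<open>enum_word (prod_encode (list_encode l, m)) = l\<close>
  for every \<open>m\<close>, so the chain below multiplies in every word arbitrarily late.\<close>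
fun idem_chain :: "nat set \<Rightarrow> nat \<Rightarrow> pw" where
  "idem_chain B 0 = oone B"
| "idem_chain B (Suc n) = oomega B (omul B (omul B (idem_chain B n) (oword B (enum_word n))) (idem_chain B n))"

lemma idem_chain_Omega: "idem_chain B n \<in> Omega B"
  by (induction n) (auto intro!: oomega_Omega omul_Omega oone_Omega oword_Omega)

lemma idem_chain_stabilizes_at:
  assumes t: "(T, f) \<in> tests B"
  shows "\<exists>N. \<forall>n\<ge>N. idem_chain B n T f = idem_chain B N T f"
proof -
  have T: "monoid T" "finite (carrier T)" using t by (auto simp: tests_def)
  show ?thesis
  proof (rule monoid.idem_chain_stabilizes[OF T, where s = "\<lambda>n. idem_chain B n T f"
        and x = "\<lambda>n. word_eval T f B (enum_word n)"])
    show "idem_chain B 0 T f \<in> carrier T" "idem_chain B 0 T f \<otimes>\<^bsub>T\<^esub> idem_chain B 0 T f = idem_chain B 0 T f"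
      using t T by (auto simp: monoid.one_closed)
    show "word_eval T f B (enum_word n) \<in> carrier T" for n using word_eval_closed[OF t] .
    show "idem_chain B (Suc n) T f = (idem_chain B n T f \<otimes>\<^bsub>T\<^esub> word_eval T f B (enum_word n)
        \<otimes>\<^bsub>T\<^esub> idem_chain B n T f) [^]\<^bsub>T\<^esub> (fact (card (carrier T)) :: nat)" for n
      using t by (simp add: omega_pow_def oword_tests)
  qed
qed

definition idem_chain_limit_index :: "nat set \<Rightarrow> nat monoid \<Rightarrow> (nat \<Rightarrow> nat) \<Rightarrow> nat" where
  "idem_chain_limit_index B T f = (SOME N. \<forall>n\<ge>N. idem_chain B n T f = idem_chain B N T f)"

definition min_idem :: "nat set \<Rightarrow> pw" where
  "min_idem B = (\<lambda>T f. if (T, f) \<in> tests B then idem_chain B (idem_chain_limit_index B T f) T f else undefined)"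

lemma idem_chain_eq_min_idem:
  assumes t: "(T, f) \<in> tests B" and n: "n \<ge> idem_chain_limit_index B T f"
  shows "idem_chain B n T f = min_idem B T f"
proof -
  have "\<forall>n\<ge>idem_chain_limit_index B T f. idem_chain B n T f = idem_chain B (idem_chain_limit_index B T f) T f"
    unfolding idem_chain_limit_index_def by (rule someI_ex[OF idem_chain_stabilizes_at[OF t]])
  hence "idem_chain B n T f = idem_chain B (idem_chain_limit_index B T f) T f" using n by blast
  thus ?thesis using t by (simp add: min_idem_def)
qed

lemma min_idem_Omega: "min_idem B \<in> Omega B"
proof (rule OmegaI)
  fix T f assume "(T, f) \<in> tests B"
  thus "min_idem B T f \<in> carrier T" using Omega_closed[OF idem_chain_Omega] by (simp add: min_idem_def)
next
  fix T and f g :: "nat \<Rightarrow> nat"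
  assume fg: "\<forall>a\<in>B. f a = g a" and t: "(T, f) \<in> tests B" "(T, g) \<in> tests B"
  let ?n = "max (idem_chain_limit_index B T f) (idem_chain_limit_index B T g)"
  have "min_idem B T f = idem_chain B ?n T f" using idem_chain_eq_min_idem[OF t(1)] by simp
  also have "\<dots> = idem_chain B ?n T g" using Omega_cong[OF idem_chain_Omega fg] .
  also have "\<dots> = min_idem B T g" using idem_chain_eq_min_idem[OF t(2)] by simp
  finally show "min_idem B T f = min_idem B T g" .
next
  fix T f T' h assume t: "(T, f) \<in> tests B" and T': "monoid T'" "finite (carrier T')" "mhom h T T'"
  let ?n = "max (idem_chain_limit_index B T f) (idem_chain_limit_index B T' (h \<circ> f))"
  have "min_idem B T' (h \<circ> f) = idem_chain B ?n T' (h \<circ> f)"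
    using idem_chain_eq_min_idem[OF tests_mhom[OF t T']] by simp
  also have "\<dots> = h (idem_chain B ?n T f)" using Omega_mhom[OF idem_chain_Omega t T'] .
  also have "\<dots> = h (min_idem B T f)" using idem_chain_eq_min_idem[OF t] by simp
  finally show "min_idem B T' (h \<circ> f) = h (min_idem B T f)" .
qed (simp add: min_idem_def)

lemma min_idem_idem: "omul B (min_idem B) (min_idem B) = min_idem B"
proof (rule Omega_eqI[OF omul_Omega[OF min_idem_Omega min_idem_Omega] min_idem_Omega])
  fix T f assume t: "(T, f) \<in> tests B"
  let ?n = "idem_chain_limit_index B T f"
  have T: "monoid T" "finite (carrier T)" using t by (auto simp: tests_def)
  have "min_idem B T f = idem_chain B (Suc ?n) T f" by (rule idem_chain_eq_min_idem[OF t, symmetric]) simp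
  moreover have "idem_chain B ?n T f \<otimes>\<^bsub>T\<^esub> oword B (enum_word ?n) T f \<otimes>\<^bsub>T\<^esub> idem_chain B ?n T f \<in> carrier T"
    using Omega_closed[OF idem_chain_Omega t] Omega_closed[OF oword_Omega t] T by (simp add: monoid.m_closed)
  ultimately show "omul B (min_idem B) (min_idem B) T f = min_idem B T f"
    using t monoid.nat_pow_fact_idem[OF T] by (simp add: omega_pow_def)
qed

text \<open>That is, \<open>min_idem B\<close> lies in the minimal ideal of every finite quotient.\<close>
lemma oomega_min_idem_sandwich:
  assumes w: "w \<in> Omega B"
  shows "oomega B (omul B (omul B (min_idem B) w) (min_idem B)) = min_idem B"
proof (rule Omega_eqI)
  show "oomega B (omul B (omul B (min_idem B) w) (min_idem B)) \<in> Omega B"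
    using w min_idem_Omega by (auto intro!: oomega_Omega omul_Omega)
next
  fix T f assume t: "(T, f) \<in> tests B"
  obtain l where l: "w T f = word_eval T f B l" using Omega_eq_word[OF w, of "{(T, f)}"] t by blast
  let ?n = "prod_encode (list_encode l, idem_chain_limit_index B T f)"
  have n: "?n \<ge> idem_chain_limit_index B T f" by (rule le_prod_encode_2)
  have "min_idem B T f = idem_chain B (Suc ?n) T f" by (rule idem_chain_eq_min_idem[OF t, symmetric]) (use n in simp)
  also have "\<dots> = omega_pow T (idem_chain B ?n T f \<otimes>\<^bsub>T\<^esub> word_eval T f B l \<otimes>\<^bsub>T\<^esub> idem_chain B ?n T f)"
    using t by (simp add: enum_word_def oword_tests)
  also have "\<dots> = omega_pow T (min_idem B T f \<otimes>\<^bsub>T\<^esub> w T f \<otimes>\<^bsub>T\<^esub> min_idem B T f)"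
    using idem_chain_eq_min_idem[OF t n] l by simp
  finally show "oomega B (omul B (omul B (min_idem B) w) (min_idem B)) T f = min_idem B T f" using t by simp
qed (rule min_idem_Omega)

lemma (in group_system) provable_min_idem_oone: "(min_idem B, oone B) \<in> provable Sig B"
proof (rule provable_approxI[OF min_idem_Omega oone_Omega])
  fix F assume F: "finite F" "F \<subseteq> tests B"
  let ?m = "\<Sum>g\<in>F. idem_chain_limit_index B (fst g) (snd g)"
  have "agree F (min_idem B) (idem_chain B (Suc ?m))" unfolding agree_def
  proof clarify
    fix T f assume g: "(T, f) \<in> F"
    have "idem_chain_limit_index B T f \<le> ?m"
      using member_le_sum[OF g _ F(1), of "\<lambda>g. idem_chain_limit_index B (fst g) (snd g)"] by simp
    thus "min_idem B T f = idem_chain B (Suc ?m) T f" using idem_chain_eq_min_idem[of T f B "Suc ?m"] g F by auto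
  qed
  moreover have "(idem_chain B (Suc ?m), oone B) \<in> provable Sig B"
    using provable_oomega_oone idem_chain_Omega oword_Omega by (simp add: omul_Omega)
  ultimately show "\<exists>a' b'. (a', b') \<in> provable Sig B \<and> agree F (min_idem B) a' \<and> agree F (oone B) b'"
    using agree_refl by blast
qed

section \<open>Finite models from provability\<close>

context pseudoidentity_system begin

text \<open>Every evaluation of a pseudoidentity of \<open>\<Sigma>\<close> in \<open>T\<close> factors through a substitution
  into \<open>\<Omega>\<^sub>B\<close>, under which both sides become provably equal.\<close>
lemma models_if_provable_quotient:
  assumes T: "monoid T" "finite (carrier T)" and \<kappa>: "cont_hom_fin B T \<kappa>"
    and onto: "carrier T \<subseteq> \<kappa> ` Omega B"
    and resp: "\<And>x y. (x, y) \<in> provable Sig B \<Longrightarrow> \<kappa> x = \<kappa> y"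
  shows "T \<in> models Sig"
  unfolding models_def
proof (intro CollectI conjI ballI)
  fix s assume s: "s \<in> Sig"
  obtain C p q where sd: "s = (C, p, q)" by (cases s) auto
  have pq: "p \<in> Omega C" "q \<in> Omega C" using Sig_Omega s sd by auto
  show "psat T s" unfolding sd psat_def
  proof (simp, intro allI impI)
    fix \<psi> assume \<psi>: "cont_hom_fin C T \<psi>"
    have "\<exists>a. a \<in> Omega B \<and> \<kappa> a = \<psi> (ogen C c)" if "c \<in> C" for c
      using subsetD[OF onto cont_hom_fin_closed[OF \<psi> ogen_Omega[OF that]]] by auto
    then obtain w where w: "\<And>c. c \<in> C \<Longrightarrow> w c \<in> Omega B \<and> \<kappa> (w c) = \<psi> (ogen C c)" by metis
    have w_Omega: "\<And>c. c \<in> C \<Longrightarrow> w c \<in> Omega B" using w by blast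
    have \<phi>: "cont_hom C B (subst B w)" by (rule cont_hom_subst) (rule w_Omega)
    have factor: "\<psi> z = \<kappa> (subst B w z)" if "z \<in> Omega C" for z
      using cont_hom_fin_eqI[OF \<psi> cont_hom_fin_comp[OF \<phi> \<kappa>] _ that] w subst_ogen[OF w_Omega] by simp
    have "(subst B w p, subst B w q) \<in> provable Sig B"
      using Sigma0_instance[OF _ \<phi>] s sd Sigma0_subset_provable by blast
    thus "\<psi> p = \<psi> q" using factor pq resp by simp
  qed
qed (use T in auto)

end

section \<open>The group of sandwiches\<close>

locale group_system_on = group_system +
  fixes B :: "nat set"
begin

abbreviation E :: pw where "E \<equiv> min_idem B"

definition sandwich :: "pw \<Rightarrow> pw" where
  "sandwich x = omul B (omul B E x) E"

definition sandwich_inv :: "pw \<Rightarrow> pw" where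
  "sandwich_inv x = oomega_pred B (sandwich x)"

definition provably_one :: "pw set" where
  "provably_one = {n \<in> Omega B. (n, oone B) \<in> provable Sig B}"

lemma sandwich_Omega: "x \<in> Omega B \<Longrightarrow> sandwich x \<in> Omega B"
  unfolding sandwich_def using min_idem_Omega by (auto intro!: omul_Omega)

lemma sandwich_inv_Omega: "x \<in> Omega B \<Longrightarrow> sandwich_inv x \<in> Omega B"
  unfolding sandwich_inv_def using sandwich_Omega by (auto intro!: oomega_pred_Omega)

context
  fixes T f assumes t: "(T, f) \<in> tests B"
begin

lemma E_tests:
  shows "E T f \<in> carrier T" and "E T f \<otimes>\<^bsub>T\<^esub> E T f = E T f"
    and "\<And>y. y \<in> carrier T \<Longrightarrow> E T f \<otimes>\<^bsub>T\<^esub> (E T f \<otimes>\<^bsub>T\<^esub> y) = E T f \<otimes>\<^bsub>T\<^esub> y"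
proof -
  show E: "E T f \<in> carrier T" using Omega_closed[OF min_idem_Omega t] .
  have "omul B E E T f = E T f" by (simp only: min_idem_idem)
  thus EE: "E T f \<otimes>\<^bsub>T\<^esub> E T f = E T f" using t by simp
  show "E T f \<otimes>\<^bsub>T\<^esub> (E T f \<otimes>\<^bsub>T\<^esub> y) = E T f \<otimes>\<^bsub>T\<^esub> y" if "y \<in> carrier T" for y
    using E EE that t by (simp add: tests_def monoid.m_assoc[symmetric])
qed

lemma sandwich_tests: "sandwich x T f = E T f \<otimes>\<^bsub>T\<^esub> x T f \<otimes>\<^bsub>T\<^esub> E T f"
  using t by (simp add: sandwich_def)

lemma E_sandwich_tests:
  assumes x: "x \<in> Omega B"
  shows "E T f \<otimes>\<^bsub>T\<^esub> sandwich x T f = sandwich x T f" "sandwich x T f \<otimes>\<^bsub>T\<^esub> E T f = sandwich x T f"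
proof -
  have T: "monoid T" using t by (simp add: tests_def)
  have x': "x T f \<in> carrier T" using Omega_closed[OF x t] .
  show "E T f \<otimes>\<^bsub>T\<^esub> sandwich x T f = sandwich x T f" "sandwich x T f \<otimes>\<^bsub>T\<^esub> E T f = sandwich x T f"
    using E_tests x' T by (simp_all add: sandwich_tests monoid.m_assoc[symmetric] monoid.m_closed,
      simp add: monoid.m_assoc monoid.m_closed)
qed

lemma sandwich_omul_tests:
  assumes x: "x \<in> Omega B" and y: "y \<in> Omega B"
  shows "sandwich x T f \<otimes>\<^bsub>T\<^esub> sandwich y T f = sandwich (omul B (omul B x E) y) T f"
  using E_tests Omega_closed[OF x t] Omega_closed[OF y t] t
  by (simp add: sandwich_tests tests_def monoid.m_assoc monoid.m_closed)

lemma sandwich_oone_tests: "sandwich (oone B) T f = E T f"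
  using E_tests t by (simp add: sandwich_tests tests_def)

lemma sandwich_inv_tests:
  assumes x: "x \<in> Omega B"
  shows "sandwich_inv x T f \<otimes>\<^bsub>T\<^esub> sandwich x T f = E T f"
    and "sandwich (sandwich_inv x) T f = sandwich_inv x T f"
proof -
  have T: "monoid T" "finite (carrier T)" using t by (auto simp: tests_def)
  let ?z = "sandwich x T f"
  have z: "?z \<in> carrier T" using Omega_closed[OF sandwich_Omega[OF x] t] .
  have "omega_pow T ?z = E T f"
    using arg_cong[OF oomega_min_idem_sandwich[OF x], of "\<lambda>u. u T f"] t by (simp add: sandwich_def)
  note inv = monoid.nat_pow_pred_inverse[OF T z E_tests(1) E_sandwich_tests(1)[OF x] this[unfolded omega_pow_def]]
  show "sandwich_inv x T f \<otimes>\<^bsub>T\<^esub> ?z = E T f"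
    using inv(1) t by (simp add: sandwich_inv_def omega_pred_pow_def)
  have "1 \<le> 2 * fact (card (carrier T)) - (1::nat)"
    using fact_ge_Suc_0_nat[of "card (carrier T)"] by linarith
  from monoid.nat_pow_absorb_right[OF T(1) z E_tests(1) E_sandwich_tests(2)[OF x] this]
  have "sandwich_inv x T f \<otimes>\<^bsub>T\<^esub> E T f = sandwich_inv x T f"
    using t by (simp add: sandwich_inv_def omega_pred_pow_def)
  thus "sandwich (sandwich_inv x) T f = sandwich_inv x T f"
    using inv(2) t E_tests T(1) by (simp add: sandwich_tests sandwich_inv_def omega_pred_pow_def)
qed

end

lemma provable_sandwich: "x \<in> Omega B \<Longrightarrow> (sandwich x, x) \<in> provable Sig B"
  using provable_omul[OF provable_omul[OF provable_min_idem_oone provable_refl] provable_min_idem_oone]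
  by (simp add: sandwich_def omul_oone_left omul_oone_right)

lemma provable_sandwich_cong: "(x, y) \<in> provable Sig B \<Longrightarrow> (sandwich x, sandwich y) \<in> provable Sig B"
  unfolding sandwich_def by (intro provable_omul provable_refl min_idem_Omega)

lemma provable_sandwich_inv: "x \<in> Omega B \<Longrightarrow> (sandwich_inv x, oomega_pred B x) \<in> provable Sig B"
  unfolding sandwich_inv_def by (intro provable_oomega_pred provable_sandwich)

lemma provable_mul_E_inv:
  assumes xy: "(x, y) \<in> provable Sig B"
  shows "omul B (omul B x E) (sandwich_inv y) \<in> provably_one"
proof -
  note \<Omega> = provable_Omega[OF xy]
  have "(omul B (omul B x E) (sandwich_inv y), omul B (omul B y (oone B)) (oomega_pred B y)) \<in> provable Sig B"
    by (intro provable_omul xy provable_min_idem_oone provable_sandwich_inv \<Omega>)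
  also have "omul B (omul B y (oone B)) (oomega_pred B y) = oomega B y"
    using \<Omega> by (simp add: omul_oone_right omul_oomega_pred)
  finally have "(omul B (omul B x E) (sandwich_inv y), oone B) \<in> provable Sig B"
    using provable_oomega_oone[OF \<Omega>(2)] provable_trans by blast
  thus ?thesis unfolding provably_one_def using provable_Omega by blast
qed

lemma provably_one_Omega: "n \<in> provably_one \<Longrightarrow> n \<in> Omega B"
  by (simp add: provably_one_def)

lemma oone_provably_one: "oone B \<in> provably_one"
  using provable_refl oone_Omega by (simp add: provably_one_def)

lemma provably_one_mul:
  assumes "n \<in> provably_one" "m \<in> provably_one"
  shows "omul B (omul B n E) m \<in> provably_one"
proof -
  have "(omul B (omul B n E) m, omul B (omul B (oone B) (oone B)) (oone B)) \<in> provable Sig B"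
    using assms by (intro provable_omul provable_min_idem_oone) (auto simp: provably_one_def)
  thus ?thesis using provable_Omega unfolding provably_one_def by (simp add: omul_oone_left oone_Omega)
qed

lemma provably_one_sandwich_inv:
  assumes "n \<in> provably_one"
  shows "sandwich_inv n \<in> provably_one"
proof -
  have n: "(n, oone B) \<in> provable Sig B" "n \<in> Omega B" using assms by (auto simp: provably_one_def)
  have "(sandwich_inv n, oomega_pred B n) \<in> provable Sig B" using provable_sandwich_inv n(2) .
  moreover have "(oomega_pred B n, oone B) \<in> provable Sig B"
    using provable_oomega_pred[OF n(1)] by (simp add: oomega_pred_oone)
  ultimately have "(sandwich_inv n, oone B) \<in> provable Sig B" by (rule provable_trans)
  thus ?thesis unfolding provably_one_def using provable_Omega by blast
qed

lemma provably_one_conj: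
  assumes a: "a \<in> Omega B" and n: "n \<in> provably_one"
  shows "omul B (omul B (omul B (omul B a E) n) E) (sandwich_inv a) \<in> provably_one"
proof -
  have "(omul B (omul B a E) n, omul B (omul B a (oone B)) (oone B)) \<in> provable Sig B"
    using n a by (intro provable_omul provable_min_idem_oone provable_refl) (auto simp: provably_one_def)
  hence "(omul B (omul B a E) n, a) \<in> provable Sig B" using a by (simp add: omul_oone_right)
  thus ?thesis using provable_mul_E_inv by blast
qed

end

text \<open>On finitely many evaluation points \<open>F\<close>, the sandwiches \<open>E x E\<close> with the product
  \<open>x \<cdot> y := x E y\<close> form a finite group: its elements lie in the maximal subgroup at \<open>E\<close> of a
  finite product of monoids. Provably-one elements form a normal subgroup, so the quotient is a
  finite group to which \<open>\<Omega>\<^sub>B\<close> maps continuously and compatibly with provability.\<close>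
locale sandwich_window = group_system_on +
  fixes F :: "(nat monoid \<times> (nat \<Rightarrow> nat)) set"
  assumes F: "finite F" "F \<subseteq> tests B"
begin

definition restr :: "pw \<Rightarrow> (nat monoid \<times> (nat \<Rightarrow> nat)) \<Rightarrow> nat" where
  "restr x = restrict (\<lambda>g. sandwich x (fst g) (snd g)) F"

definition sandwich_group :: "((nat monoid \<times> (nat \<Rightarrow> nat)) \<Rightarrow> nat) monoid" where
  "sandwich_group = \<lparr>carrier = restr ` Omega B, mult = (\<lambda>a b. restrict (\<lambda>g. a g \<otimes>\<^bsub>fst g\<^esub> b g) F),
     one = restr (oone B)\<rparr>"

abbreviation "G \<equiv> sandwich_group"

lemma F_tests: "g \<in> F \<Longrightarrow> (fst g, snd g) \<in> tests B"
  using F by auto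

lemma G_carrier: "carrier G = restr ` Omega B"
  by (simp add: sandwich_group_def)

lemma restr_closed: "x \<in> Omega B \<Longrightarrow> restr x \<in> carrier G"
  by (simp add: G_carrier)

lemma restr_mult:
  assumes "x \<in> Omega B" "y \<in> Omega B"
  shows "restr x \<otimes>\<^bsub>G\<^esub> restr y = restr (omul B (omul B x E) y)"
  unfolding sandwich_group_def restr_def
  by (simp, rule restrict_ext) (simp add: sandwich_omul_tests[OF F_tests assms])

lemma restr_one_mult: "x \<in> Omega B \<Longrightarrow> \<one>\<^bsub>G\<^esub> \<otimes>\<^bsub>G\<^esub> restr x = restr x"
  unfolding sandwich_group_def restr_def
  by (simp, rule restrict_ext) (simp add: sandwich_oone_tests[OF F_tests] E_sandwich_tests[OF F_tests])

lemma restr_inv_mult: "x \<in> Omega B \<Longrightarrow> restr (sandwich_inv x) \<otimes>\<^bsub>G\<^esub> restr x = \<one>\<^bsub>G\<^esub>"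
  unfolding sandwich_group_def restr_def
  by (simp, rule restrict_ext) (simp add: sandwich_oone_tests[OF F_tests] sandwich_inv_tests[OF F_tests])

lemma restr_eqI: "agree F x x' \<Longrightarrow> restr x = restr x'"
  unfolding restr_def agree_def
  by (rule restrict_ext) (auto simp: sandwich_tests[OF F_tests])

lemma sandwich_group_group: "group G"
proof (rule groupI)
  fix a b assume "a \<in> carrier G" "b \<in> carrier G"
  thus "a \<otimes>\<^bsub>G\<^esub> b \<in> carrier G"
    using restr_mult min_idem_Omega unfolding G_carrier by (auto intro!: omul_Omega)
next
  show "\<one>\<^bsub>G\<^esub> \<in> carrier G" using oone_Omega by (simp add: sandwich_group_def)
next
  fix a b c assume "a \<in> carrier G" "b \<in> carrier G" "c \<in> carrier G"
  then obtain x y z where \<Omega>: "x \<in> Omega B" "y \<in> Omega B" "z \<in> Omega B"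
    and "a = restr x" "b = restr y" "c = restr z"
    unfolding G_carrier by auto
  thus "a \<otimes>\<^bsub>G\<^esub> b \<otimes>\<^bsub>G\<^esub> c = a \<otimes>\<^bsub>G\<^esub> (b \<otimes>\<^bsub>G\<^esub> c)"
    using min_idem_Omega by (simp add: restr_mult omul_Omega omul_assoc)
next
  fix a assume "a \<in> carrier G"
  thus "\<one>\<^bsub>G\<^esub> \<otimes>\<^bsub>G\<^esub> a = a" using restr_one_mult unfolding G_carrier by auto
next
  fix a assume "a \<in> carrier G"
  then obtain x where "x \<in> Omega B" "a = restr x" unfolding G_carrier by auto
  thus "\<exists>b\<in>carrier G. b \<otimes>\<^bsub>G\<^esub> a = \<one>\<^bsub>G\<^esub>"
    using restr_inv_mult sandwich_inv_Omega restr_closed by blast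
qed

lemma sandwich_group_finite: "finite (carrier G)"
proof (rule finite_subset)
  show "carrier G \<subseteq> PiE F (\<lambda>g. carrier (fst g))"
    unfolding G_carrier restr_def using Omega_closed[OF sandwich_Omega F_tests] by auto
  show "finite (PiE F (\<lambda>g. carrier (fst g)))" using F F_tests by (intro finite_PiE) (auto simp: tests_def)
qed

lemma inv_restr: "x \<in> Omega B \<Longrightarrow> inv\<^bsub>G\<^esub> (restr x) = restr (sandwich_inv x)"
  by (rule group.inv_equality[OF sandwich_group_group restr_inv_mult restr_closed restr_closed])
    (simp_all add: sandwich_inv_Omega)

definition kernel :: "((nat monoid \<times> (nat \<Rightarrow> nat)) \<Rightarrow> nat) set" where
  "kernel = restr ` provably_one"

lemma kernel_subgroup: "subgroup kernel G"
proof (rule group.subgroupI[OF sandwich_group_group])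
  show "kernel \<subseteq> carrier G" unfolding kernel_def G_carrier using provably_one_Omega by auto
  show "kernel \<noteq> {}" unfolding kernel_def using oone_provably_one by auto
next
  fix a assume "a \<in> kernel"
  then obtain n where "n \<in> provably_one" "a = restr n" unfolding kernel_def by auto
  thus "inv\<^bsub>G\<^esub> a \<in> kernel"
    using inv_restr provably_one_Omega provably_one_sandwich_inv unfolding kernel_def by auto
next
  fix a b assume "a \<in> kernel" "b \<in> kernel"
  then obtain n m where "n \<in> provably_one" "m \<in> provably_one" "a = restr n" "b = restr m"
    unfolding kernel_def by auto
  thus "a \<otimes>\<^bsub>G\<^esub> b \<in> kernel"
    using restr_mult provably_one_Omega provably_one_mul unfolding kernel_def by auto
qed

lemma kernel_normal: "kernel \<lhd> G"
proof -
  have "x \<otimes>\<^bsub>G\<^esub> h \<otimes>\<^bsub>G\<^esub> inv\<^bsub>G\<^esub> x \<in> kernel" if x: "x \<in> carrier G" and h: "h \<in> kernel" for x h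
  proof -
    obtain a n where a: "a \<in> Omega B" "x = restr a" and n: "n \<in> provably_one" "h = restr n"
      using x h unfolding G_carrier kernel_def by auto
    have "x \<otimes>\<^bsub>G\<^esub> h \<otimes>\<^bsub>G\<^esub> inv\<^bsub>G\<^esub> x =
        restr (omul B (omul B (omul B (omul B a E) n) E) (sandwich_inv a))"
      using a n provably_one_Omega min_idem_Omega sandwich_inv_Omega
      by (simp add: inv_restr restr_mult omul_Omega)
    thus ?thesis using provably_one_conj[OF a(1) n(1)] unfolding kernel_def by auto
  qed
  thus ?thesis using group.normal_inv_iff[OF sandwich_group_group] kernel_subgroup by blast
qed

lemma rcos_restr_eq:
  assumes xy: "(x, y) \<in> provable Sig B"
  shows "kernel #>\<^bsub>G\<^esub> restr x = kernel #>\<^bsub>G\<^esub> restr y"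
proof -
  note \<Omega> = provable_Omega[OF xy]
  have "restr x \<otimes>\<^bsub>G\<^esub> inv\<^bsub>G\<^esub> restr y = restr (omul B (omul B x E) (sandwich_inv y))"
    using \<Omega> by (simp add: inv_restr restr_mult sandwich_inv_Omega)
  hence "restr x \<otimes>\<^bsub>G\<^esub> inv\<^bsub>G\<^esub> restr y \<in> kernel"
    using provable_mul_E_inv[OF xy] unfolding kernel_def by auto
  hence "restr x \<in> kernel #>\<^bsub>G\<^esub> restr y"
    using subgroup.rcos_module[OF kernel_subgroup sandwich_group_group restr_closed restr_closed] \<Omega> by simp
  thus ?thesis
    using group.repr_independence[OF sandwich_group_group _ restr_closed[OF \<Omega>(2)] kernel_subgroup] by simp
qed

definition coset_map :: "pw \<Rightarrow> ((nat monoid \<times> (nat \<Rightarrow> nat)) \<Rightarrow> nat) set" where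
  "coset_map x = kernel #>\<^bsub>G\<^esub> restr x"

lemma coset_map_closed: "x \<in> Omega B \<Longrightarrow> coset_map x \<in> carrier (G Mod kernel)"
  unfolding coset_map_def carrier_FactGroup using restr_closed by auto

lemma coset_map_omul:
  assumes x: "x \<in> Omega B" and y: "y \<in> Omega B"
  shows "coset_map (omul B x y) = coset_map x \<otimes>\<^bsub>G Mod kernel\<^esub> coset_map y"
proof -
  have "(omul B (omul B x E) y, omul B (omul B x (oone B)) y) \<in> provable Sig B"
    by (intro provable_omul provable_refl provable_min_idem_oone x y)
  hence "(omul B (omul B x E) y, omul B x y) \<in> provable Sig B" using x by (simp add: omul_oone_right)
  from rcos_restr_eq[OF this]
  have "coset_map (omul B x y) = kernel #>\<^bsub>G\<^esub> (restr x \<otimes>\<^bsub>G\<^esub> restr y)"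
    by (simp add: coset_map_def restr_mult[OF x y])
  also have "\<dots> = coset_map x \<otimes>\<^bsub>G Mod kernel\<^esub> coset_map y"
    unfolding coset_map_def FactGroup_def
    using normal.rcos_sum[OF kernel_normal restr_closed[OF x] restr_closed[OF y]] by simp
  finally show ?thesis .
qed

lemma coset_map_oone: "coset_map (oone B) = \<one>\<^bsub>G Mod kernel\<^esub>"
proof -
  have "coset_map (oone B) = kernel #>\<^bsub>G\<^esub> \<one>\<^bsub>G\<^esub>" by (simp add: coset_map_def sandwich_group_def)
  also have "\<dots> = kernel"
    using group.coset_mult_one[OF sandwich_group_group] subgroup.subset[OF kernel_subgroup] by blast
  finally show ?thesis by (simp add: FactGroup_def)
qed

lemma quotient_model:
  obtains T :: "nat monoid" and \<kappa> where "T \<in> models Sig" "cont_hom_fin B T \<kappa>"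
    "\<And>x y. x \<in> Omega B \<Longrightarrow> y \<in> Omega B \<Longrightarrow> \<kappa> x = \<kappa> y \<Longrightarrow> coset_map x = coset_map y"
proof -
  let ?Q = "G Mod kernel"
  have Q: "monoid ?Q" "finite (carrier ?Q)"
    using group.is_monoid[OF normal.factorgroup_is_group[OF kernel_normal]] sandwich_group_finite
    by (simp_all add: carrier_FactGroup)
  obtain T :: "nat monoid" and \<iota> where T: "monoid T" "finite (carrier T)" "carrier T = \<iota> ` carrier ?Q"
    "inj_on \<iota> (carrier ?Q)" "\<And>x y. x \<in> carrier ?Q \<Longrightarrow> y \<in> carrier ?Q \<Longrightarrow> \<iota> (x \<otimes>\<^bsub>?Q\<^esub> y) = \<iota> x \<otimes>\<^bsub>T\<^esub> \<iota> y"
    "\<iota> \<one>\<^bsub>?Q\<^esub> = \<one>\<^bsub>T\<^esub>"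
    by (rule finite_monoid_iso_nat[OF Q]) (rule that)
  let ?\<kappa> = "\<iota> \<circ> coset_map"
  have \<kappa>: "cont_hom_fin B T ?\<kappa>" unfolding cont_hom_fin_def
  proof (intro conjI ballI)
    show "?\<kappa> \<in> Omega B \<rightarrow> carrier T" using coset_map_closed T(3) by auto
    show "?\<kappa> (omul B x y) = ?\<kappa> x \<otimes>\<^bsub>T\<^esub> ?\<kappa> y" if "x \<in> Omega B" "y \<in> Omega B" for x y
      using that by (simp only: comp_def coset_map_omul coset_map_closed T(5))
    show "?\<kappa> (oone B) = \<one>\<^bsub>T\<^esub>" using coset_map_oone T(6) by simp
    show "\<exists>F'. finite F' \<and> F' \<subseteq> tests B \<and> (\<forall>u'\<in>Omega B. agree F' x u' \<longrightarrow> ?\<kappa> u' = ?\<kappa> x)" for x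
      using F restr_eqI by (intro exI[of _ F]) (auto simp: coset_map_def)
  qed
  have "T \<in> models Sig"
  proof (rule models_if_provable_quotient[OF T(1,2) \<kappa>])
    show "carrier T \<subseteq> ?\<kappa> ` Omega B" unfolding T(3) carrier_FactGroup G_carrier coset_map_def by auto
    show "?\<kappa> x = ?\<kappa> y" if "(x, y) \<in> provable Sig B" for x y
      using rcos_restr_eq[OF that] by (simp add: coset_map_def)
  qed
  moreover have "coset_map x = coset_map y" if "x \<in> Omega B" "y \<in> Omega B" "?\<kappa> x = ?\<kappa> y" for x y
    using that T(4) coset_map_closed by (auto simp: inj_on_def)
  ultimately show ?thesis using that \<kappa> by blast
qed

lemma valid_restr_eq:
  assumes u: "u \<in> Omega B" and v: "v \<in> Omega B" and valid: "\<forall>T\<in>models Sig. psat T (B, u, v)"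
  obtains n where "n \<in> provably_one" "restr u = restr (omul B (omul B n E) v)"
proof -
  obtain T \<kappa> where T: "T \<in> models Sig" "cont_hom_fin B T \<kappa>"
    and inj: "\<And>x y. x \<in> Omega B \<Longrightarrow> y \<in> Omega B \<Longrightarrow> \<kappa> x = \<kappa> y \<Longrightarrow> coset_map x = coset_map y"
    by (rule quotient_model) (rule that)
  have "\<kappa> u = \<kappa> v" using valid T unfolding psat_def by auto
  hence "coset_map u = coset_map v" using inj u v by blast
  moreover have "restr u \<in> kernel #>\<^bsub>G\<^esub> restr u"
    using group.rcos_self[OF sandwich_group_group restr_closed[OF u] kernel_subgroup] .
  ultimately have "restr u \<in> kernel #>\<^bsub>G\<^esub> restr v" by (simp add: coset_map_def)
  then obtain n where "n \<in> provably_one" "restr u = restr n \<otimes>\<^bsub>G\<^esub> restr v"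
    unfolding r_coset_def kernel_def by auto
  thus ?thesis using that restr_mult provably_one_Omega v by simp
qed

end

text \<open>On each finite window \<open>F\<close> the sandwich of \<open>u\<close> agrees with that of an element provably
  equal to \<open>v\<close>; closure of provability under limits then yields \<open>E u E = E v E\<close>.\<close>
lemma (in group_system_on) provable_if_valid:
  assumes u: "u \<in> Omega B" and v: "v \<in> Omega B" and valid: "\<forall>T\<in>models Sig. psat T (B, u, v)"
  shows "(u, v) \<in> provable Sig B"
proof -
  have "(sandwich u, sandwich v) \<in> provable Sig B"
  proof (rule provable_approxI[OF sandwich_Omega[OF u] sandwich_Omega[OF v]])
    fix F assume F: "finite F" "F \<subseteq> tests B"
    interpret sandwich_window Sig B F using F by unfold_locales
    obtain n where n: "n \<in> provably_one" "restr u = restr (omul B (omul B n E) v)"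
      using valid_restr_eq[OF u v valid] by blast
    have "(omul B (omul B n E) v, omul B (omul B (oone B) (oone B)) v) \<in> provable Sig B"
      using n(1) by (intro provable_omul provable_min_idem_oone provable_refl v) (simp add: provably_one_def)
    hence "(sandwich (omul B (omul B n E) v), sandwich v) \<in> provable Sig B"
      using v by (simp add: omul_oone_left oone_Omega provable_sandwich_cong)
    moreover have "agree F (sandwich u) (sandwich (omul B (omul B n E) v))"
      unfolding agree_def
    proof clarify
      fix T f assume "(T, f) \<in> F"
      thus "sandwich u T f = sandwich (omul B (omul B n E) v) T f"
        using fun_cong[OF n(2), of "(T, f)"] by (simp add: restr_def)
    qed
    ultimately show "\<exists>a' b'. (a', b') \<in> provable Sig B \<and> agree F (sandwich u) a' \<and> agree F (sandwich v) b'"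
      using agree_refl by blast
  qed
  thus ?thesis
    using provable_sym[OF provable_sandwich[OF u]] provable_sandwich[OF v] provable_trans by blast
qed

theorem corollary8p4:
  fixes Sig :: "(nat set \<times> pw \<times> pw) set"
  assumes "\<forall>(B, u, v)\<in>Sig. finite B \<and> u \<in> Omega B \<and> v \<in> Omega B"
    and "\<forall>T\<in>models Sig. group T"
  shows "h_strong Sig"
proof -
  interpret group_system Sig using assms by unfold_locales
  show ?thesis
    unfolding h_strong_def
    using group_system_on.provable_if_valid[OF group_system_on.intro[OF group_system_axioms]] by blast
qed

end
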